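(* Let $Z$ be a reproducible multiset in which $0$ appears exactly $m_0\ge0$ times. Then the Shapiro–Shields function $\mathcal S_Z$ vanishes at the origin to order exactly $m_0$; i.e. $\mathcal S_Z^{(\ell)}(0)=0$ for $0\le\ell<m_0$ and $\mathcal S_Z^{(m_0)}(0)\ne0$.
   Context: Standing assumptions: $\Omega\subset\mathbb C$ is a domain with $0\in\Omega$, $\mathcal H$ is a Hilbert space of analytic functions on $\Omega$ with bounded point evaluations at points of $\Omega$, the shift $(Sf)(z)=zf(z)$ is bounded on $\mathcal H$, and the polynomials $\mathcal P$ are dense in $\mathcal H$. A point $\beta\in\mathbb C$ is reproducible of order $m\ge0$ if $p\mapsto p^{(m)}(\beta)$ on $\mathcal P$ extends to a bounded linear functional on $\mathcal H$, represented by $k_\beta^{(m)}\in\mathcal H$; $\operatorname{ro}(\beta)$ is the supremum of such $m$. A reproducible multiset is a finite multiset consisting of $0$ with multiplicity $m_0\ge0$ and distinct nonzero reproducible points $\beta_1,\dots,\beta_s$ with multiplicities $1\le m_j\le\operatorname{ro}(\beta_j)+1$. For vectors $u,v_1,\dots,v_N$, $D(u;v_1,\dots,v_N)$ is the formal determinant of the matrix with first row $(u,\langle u,v_1\rangle,\dots,\langle u,v_N\rangle)$ and $(i+1)$-st row $(v_i,\langle v_i,v_1\rangle,\dots,\langle v_i,v_N\rangle)$, expanded along the first column. The Shapiro–Shields function is $\mathcal S_Z=D(k_0^{(m_0)};k_0^{(m_0-1)},\dots,k_0,k_{\beta_1}^{(m_1-1)},\dots,k_{\beta_1},\dots,k_{\beta_s}^{(m_s-1)},\dots,k_{\beta_s})$.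 *)

theory Defs
  imports "HOL-Complex_Analysis.Complex_Analysis"
          "HOL-Computational_Algebra.Polynomial"
          "HOL-Library.Extended_Nat"
          "HOL-Library.Multiset"
begin

text \<open>Elements of the Hilbert space H are functions complex => complex, holomorphic on
  Omega and normalised to be 0 outside Omega (so that two elements agreeing on Omega are equal).
  The inner product ip is linear in the first argument, conjugate linear in the second.\<close>

definition hnorm :: "((complex \<Rightarrow> complex) \<Rightarrow> (complex \<Rightarrow> complex) \<Rightarrow> complex)
    \<Rightarrow> (complex \<Rightarrow> complex) \<Rightarrow> real" where
  "hnorm ip f = sqrt (Re (ip f f))"

definition polyfun :: "complex set \<Rightarrow> complex poly \<Rightarrow> complex \<Rightarrow> complex" where
  "polyfun Om p = (\<lambda>z. if z \<in> Om then poly p z else 0)"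

definition analytic_hilbert ::
  "complex set \<Rightarrow> (complex \<Rightarrow> complex) set
    \<Rightarrow> ((complex \<Rightarrow> complex) \<Rightarrow> (complex \<Rightarrow> complex) \<Rightarrow> complex) \<Rightarrow> bool" where
  "analytic_hilbert Om Hs ip \<longleftrightarrow>
     open Om \<and> connected Om \<and> 0 \<in> Om \<and>
     (\<forall>f\<in>Hs. f holomorphic_on Om \<and> (\<forall>z. z \<notin> Om \<longrightarrow> f z = 0)) \<and>
     (\<lambda>z. 0) \<in> Hs \<and>
     (\<forall>f\<in>Hs. \<forall>g\<in>Hs. (\<lambda>z. f z + g z) \<in> Hs) \<and>
     (\<forall>f\<in>Hs. \<forall>c. (\<lambda>z. c * f z) \<in> Hs) \<and>
     (\<forall>f\<in>Hs. \<forall>g\<in>Hs. \<forall>h\<in>Hs. ip (\<lambda>z. f z + g z) h = ip f h + ip g h) \<and>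
     (\<forall>f\<in>Hs. \<forall>g\<in>Hs. \<forall>c. ip (\<lambda>z. c * f z) g = c * ip f g) \<and>
     (\<forall>f\<in>Hs. \<forall>g\<in>Hs. ip f g = cnj (ip g f)) \<and>
     (\<forall>f\<in>Hs. Re (ip f f) \<ge> 0) \<and>
     (\<forall>f\<in>Hs. ip f f = 0 \<longrightarrow> f = (\<lambda>z. 0)) \<and>
     \<comment> \<open>completeness\<close>
     (\<forall>X :: nat \<Rightarrow> complex \<Rightarrow> complex. (\<forall>n. X n \<in> Hs) \<and>
          (\<forall>e>0. \<exists>N. \<forall>m\<ge>N. \<forall>n\<ge>N. hnorm ip (\<lambda>z. X m z - X n z) < e)
        \<longrightarrow> (\<exists>f\<in>Hs. \<forall>e>0. \<exists>N. \<forall>n\<ge>N. hnorm ip (\<lambda>z. X n z - f z) < e)) \<and>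
     \<comment> \<open>bounded point evaluations on Omega\<close>
     (\<forall>w\<in>Om. \<exists>C. \<forall>f\<in>Hs. cmod (f w) \<le> C * hnorm ip f) \<and>
     \<comment> \<open>bounded shift\<close>
     (\<forall>f\<in>Hs. (\<lambda>z. z * f z) \<in> Hs) \<and>
     (\<exists>C. \<forall>f\<in>Hs. hnorm ip (\<lambda>z. z * f z) \<le> C * hnorm ip f) \<and>
     \<comment> \<open>polynomials belong to H and are dense\<close>
     (\<forall>p. polyfun Om p \<in> Hs) \<and>
     (\<forall>f\<in>Hs. \<forall>e>0. \<exists>p. hnorm ip (\<lambda>z. f z - polyfun Om p z) < e)"

definition reproducible ::
  "complex set \<Rightarrow> (complex \<Rightarrow> complex) set
    \<Rightarrow> ((complex \<Rightarrow> complex) \<Rightarrow> (complex \<Rightarrow> complex) \<Rightarrow> complex) \<Rightarrow> complex \<Rightarrow> nat \<Rightarrow> bool" where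
  "reproducible Om Hs ip \<beta> m \<longleftrightarrow>
     (\<exists>\<Lambda>. (\<forall>f\<in>Hs. \<forall>g\<in>Hs. \<Lambda> (\<lambda>z. f z + g z) = \<Lambda> f + \<Lambda> g) \<and>
          (\<forall>f\<in>Hs. \<forall>c. \<Lambda> (\<lambda>z. c * f z) = c * \<Lambda> f) \<and>
          (\<exists>C. \<forall>f\<in>Hs. cmod (\<Lambda> f) \<le> C * hnorm ip f) \<and>
          (\<forall>p. \<Lambda> (polyfun Om p) = poly ((pderiv ^^ m) p) \<beta>))"

definition ro ::
  "complex set \<Rightarrow> (complex \<Rightarrow> complex) set
    \<Rightarrow> ((complex \<Rightarrow> complex) \<Rightarrow> (complex \<Rightarrow> complex) \<Rightarrow> complex) \<Rightarrow> complex \<Rightarrow> enat" where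
  "ro Om Hs ip \<beta> = Sup {enat m | m. reproducible Om Hs ip \<beta> m}"

definition kern ::
  "complex set \<Rightarrow> (complex \<Rightarrow> complex) set
    \<Rightarrow> ((complex \<Rightarrow> complex) \<Rightarrow> (complex \<Rightarrow> complex) \<Rightarrow> complex) \<Rightarrow> complex \<Rightarrow> nat
    \<Rightarrow> complex \<Rightarrow> complex" where
  "kern Om Hs ip \<beta> m =
     (THE k. k \<in> Hs \<and> (\<forall>p. poly ((pderiv ^^ m) p) \<beta> = ip (polyfun Om p) k))"

definition reproducible_multiset ::
  "complex set \<Rightarrow> (complex \<Rightarrow> complex) set
    \<Rightarrow> ((complex \<Rightarrow> complex) \<Rightarrow> (complex \<Rightarrow> complex) \<Rightarrow> complex) \<Rightarrow> complex multiset \<Rightarrow> bool" where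
  "reproducible_multiset Om Hs ip Z \<longleftrightarrow>
     (\<forall>\<beta>\<in>set_mset Z. \<beta> \<noteq> 0 \<longrightarrow>
        (\<exists>m. reproducible Om Hs ip \<beta> m) \<and> enat (count Z \<beta>) \<le> ro Om Hs ip \<beta> + 1)"

definition ldet :: "nat \<Rightarrow> (nat \<Rightarrow> nat \<Rightarrow> complex) \<Rightarrow> complex" where
  "ldet n A = (\<Sum>p\<in>{p. p permutes {..<n}}. of_int (sign p) * (\<Prod>i<n. A i (p i)))"

text \<open>Formal determinant D(u; v_1,...,v_N), expanded along the first column (0-based lists).\<close>
definition formal_det ::
  "((complex \<Rightarrow> complex) \<Rightarrow> (complex \<Rightarrow> complex) \<Rightarrow> complex)
    \<Rightarrow> (complex \<Rightarrow> complex) \<Rightarrow> (complex \<Rightarrow> complex) list \<Rightarrow> complex \<Rightarrow> complex" where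
  "formal_det ip u vs =
     (let ws = u # vs; N = length vs in
      (\<lambda>z. \<Sum>i\<le>N. (-1) ^ i *
             ldet N (\<lambda>r j. ip (ws ! (if r < i then r else Suc r)) (vs ! j)) * (ws ! i) z))"

text \<open>Shapiro--Shields function. The nonzero points are enumerated in some fixed order;
  the formal determinant does not depend on this order.\<close>
definition shapiro_shields ::
  "complex set \<Rightarrow> (complex \<Rightarrow> complex) set
    \<Rightarrow> ((complex \<Rightarrow> complex) \<Rightarrow> (complex \<Rightarrow> complex) \<Rightarrow> complex) \<Rightarrow> complex multiset
    \<Rightarrow> complex \<Rightarrow> complex" where
  "shapiro_shields Om Hs ip Z =
     (let m0 = count Z 0;
          bs = (SOME bs. distinct bs \<and> set bs = set_mset Z - {0});
          k = kern Om Hs ip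
      in formal_det ip (k 0 m0)
           (rev (map (k 0) [0..<m0]) @
            concat (map (\<lambda>b. rev (map (k b) [0..<count Z b])) bs)))"

end

theory Submission
  imports Defs "Jordan_Normal_Form.Determinant"
begin

text \<open>Let w_0 = k_0^(m0) and v_1, ..., v_N be the other kernels, so that S_Z = D(w_0; v).
  Since S_Z is a combination of kernels, S_Z^(l)(0) = <S_Z, k_0^(l)> is the Gram determinant
  of w_0, v_1, ..., v_N with the column of w_0 replaced by that of k_0^(l). For l < m0 the kernel
  k_0^(l) is one of the v_i, so two columns coincide. For l = m0 it is the Gram determinant itself,
  which is nonzero since the kernels are linearly independent: so are the functionals
  p |-> p^(a)(beta) at distinct nodes (beta, a), which polynomials with prescribed zeros separate.
  The kernels exist by a Riesz representation theorem for H; 0 is reproducible of every order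
  because point evaluations are uniformly bounded on a disc (Baire) and by Cauchy's inequality,
  and reproducibility of order m + 1 implies order m via the shift.\<close>

lemma higher_deriv_poly: "(deriv ^^ l) (poly p) = poly ((pderiv ^^ l) (p :: complex poly))"
proof (induction l)
  case (Suc l)
  have "deriv (poly ((pderiv ^^ l) p)) = poly (pderiv ((pderiv ^^ l) p))"
    by (rule ext, rule DERIV_imp_deriv, rule poly_DERIV)
  then show ?case using Suc by simp
qed simp

lemma funpow_pderiv_x_mult:
  "(pderiv ^^ Suc n) ([:0, 1:] * p) =
     [:0, 1:] * (pderiv ^^ Suc n) p + Polynomial.smult (of_nat (Suc n)) ((pderiv ^^ n) (p :: complex poly))"
proof (induction n)
  case 0
  then show ?case by (simp add: pderiv_pCons add.commute)
next
  case (Suc n)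
  have x_mult: "pderiv ([:0, 1:] * q) = q + [:0, 1:] * pderiv q" for q :: "complex poly"
    by (simp add: pderiv_mult pderiv_pCons)
  have smult_Suc: "Polynomial.smult (of_nat (Suc (Suc n))) q = q + Polynomial.smult (of_nat (Suc n)) q" for q :: "complex poly"
    by (simp only: of_nat_Suc[of "Suc n"] smult_add_left smult_1_left)
  have "(pderiv ^^ Suc (Suc n)) ([:0, 1:] * p) =
      pderiv ([:0, 1:] * (pderiv ^^ Suc n) p) + Polynomial.smult (of_nat (Suc n)) (pderiv ((pderiv ^^ n) p))"
    using Suc by (simp add: pderiv_add pderiv_smult del: of_nat_Suc)
  also have "\<dots> = [:0, 1:] * (pderiv ^^ Suc (Suc n)) p + Polynomial.smult (of_nat (Suc (Suc n))) ((pderiv ^^ Suc n) p)"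
    unfolding x_mult smult_Suc by (simp add: algebra_simps)
  finally show ?case .
qed

lemma pderiv_linear_power_mult:
  "pderiv ([:-c, 1:] ^ Suc m * q) =
     [:-c, 1:] ^ m * (Polynomial.smult (of_nat (Suc m)) q + [:-c, 1:] * pderiv (q :: complex poly))"
proof -
  have "pderiv ([:-c, 1:] ^ Suc m) = Polynomial.smult (of_nat (Suc m)) ([:-c, 1:] ^ m)"
    unfolding pderiv_power_Suc by (simp add: pderiv_pCons)
  moreover have "pderiv ([:-c, 1:] ^ Suc m * q) = [:-c, 1:] ^ Suc m * pderiv q + q * pderiv ([:-c, 1:] ^ Suc m)"
    by (rule pderiv_mult)
  ultimately show ?thesis by (simp add: algebra_simps)
qed

lemma funpow_pderiv_linear_power_mult:
  "\<exists>r. (pderiv ^^ k) ([:-c, 1:] ^ (n + k) * q) = [:-c, 1:] ^ n * r \<and>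
       poly r c = pochhammer (of_nat (Suc n)) k * poly (q :: complex poly) c"
proof (induction k arbitrary: q)
  case (Suc k)
  define q' where "q' = Polynomial.smult (of_nat (Suc (n + k))) q + [:-c, 1:] * pderiv q"
  have "(pderiv ^^ Suc k) ([:-c, 1:] ^ (n + Suc k) * q) = (pderiv ^^ k) ([:-c, 1:] ^ (n + k) * q')"
    unfolding q'_def pderiv_linear_power_mult[symmetric]
    by (simp only: funpow_Suc_right comp_apply add_Suc_right)
  moreover obtain r where "(pderiv ^^ k) ([:-c, 1:] ^ (n + k) * q') = [:-c, 1:] ^ n * r"
    "poly r c = pochhammer (of_nat (Suc n)) k * poly q' c"
    using Suc.IH by blast
  moreover have "poly q' c = of_nat (Suc (n + k)) * poly q c"
    unfolding q'_def by simp
  ultimately show ?case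
    by (intro exI[of _ r]) (simp add: pochhammer_Suc algebra_simps)
qed simp

lemma poly_funpow_pderiv_eq_0_if_dvd:
  assumes "[:-c, 1:] ^ M dvd p" "a < M"
  shows "poly ((pderiv ^^ a) p) c = (0 :: complex)"
proof -
  obtain q where "p = [:-c, 1:] ^ ((M - a) + a) * q"
    using assms by (auto elim: dvdE)
  moreover obtain r where "(pderiv ^^ a) ([:-c, 1:] ^ ((M - a) + a) * q) = [:-c, 1:] ^ (M - a) * r"
    using funpow_pderiv_linear_power_mult by blast
  ultimately show ?thesis
    using assms(2) by (simp add: poly_power)
qed

lemma poly_funpow_pderiv_linear_power_mult:
  "poly ((pderiv ^^ a) ([:-c, 1:] ^ a * q)) c = fact a * poly (q :: complex poly) c"
  using funpow_pderiv_linear_power_mult[of a c 0 q] by (auto simp: pochhammer_fact)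

lemma hermite_separating_poly:
  fixes S :: "(complex \<times> nat) set"
  assumes "finite S" and "\<And>a. (b0, a) \<in> S \<Longrightarrow> a \<le> a0"
  obtains p where "poly ((pderiv ^^ a0) p) b0 \<noteq> 0"
    and "\<And>b a. (b, a) \<in> S \<Longrightarrow> (b, a) \<noteq> (b0, a0) \<Longrightarrow> poly ((pderiv ^^ a) p) b = 0"
proof -
  define M where "M = Suc (Max (snd ` S))"
  define q where "q = (\<Prod>c\<in>fst ` S - {b0}. [:-c, 1:] ^ M)"
  have "poly q b0 = (\<Prod>c\<in>fst ` S - {b0}. (b0 - c) ^ M)"
    unfolding q_def poly_prod by (simp add: poly_power)
  also have "\<dots> \<noteq> 0"
    using assms(1) by (subst prod_zero_iff) auto
  finally have q_b0: "poly q b0 \<noteq> 0" .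
  show ?thesis
  proof (rule that[of "[:-b0, 1:] ^ a0 * q"])
    show "poly ((pderiv ^^ a0) ([:-b0, 1:] ^ a0 * q)) b0 \<noteq> 0"
      using q_b0 by (simp add: poly_funpow_pderiv_linear_power_mult)
    fix b a
    assume ba: "(b, a) \<in> S" "(b, a) \<noteq> (b0, a0)"
    show "poly ((pderiv ^^ a) ([:-b0, 1:] ^ a0 * q)) b = 0"
    proof (cases "b = b0")
      case True
      then have "a < a0" using ba assms(2) by fastforce
      then show ?thesis
        using True by (intro poly_funpow_pderiv_eq_0_if_dvd[where M = a0]) auto
    next
      case False
      have "b \<in> fst ` S - {b0}"
        using ba(1) False by force
      then have "[:-b, 1:] ^ M dvd q"
        unfolding q_def using assms(1) by (intro dvd_prodI) auto
      moreover have "a \<le> Max (snd ` S)"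
        using assms(1) ba(1) by (intro Max_ge) force+
      ultimately show ?thesis
        by (intro poly_funpow_pderiv_eq_0_if_dvd[where M = M]) (auto simp: M_def)
    qed
  qed
qed

lemma hermite_functionals_independent:
  fixes ps :: "(complex \<times> nat) list"
  assumes "distinct ps"
    and zero: "\<And>p. (\<Sum>j<length ps. x j * poly ((pderiv ^^ snd (ps ! j)) p) (fst (ps ! j))) = 0"
    and "j0 < length ps"
  shows "x j0 = 0"
proof (rule ccontr)
  assume "x j0 \<noteq> 0"
  define J where "J = {j. j < length ps \<and> x j \<noteq> 0}"
  define b0 where "b0 = fst (ps ! j0)"
  define A where "A = {a. (b0, a) \<in> (!) ps ` J}"
  have "snd (ps ! j0) \<in> A"
    unfolding A_def J_def b0_def using \<open>x j0 \<noteq> 0\<close> assms(3) by force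
  moreover have "finite A"
    by (rule finite_subset[of _ "snd ` set ps"]) (auto simp: A_def J_def image_iff, metis nth_mem snd_conv)
  ultimately have "Max A \<in> A" by (intro Max_in) auto
  then obtain j1 where j1: "j1 \<in> J" "ps ! j1 = (b0, Max A)"
    unfolding A_def by auto
  obtain p where p: "poly ((pderiv ^^ Max A) p) b0 \<noteq> 0"
    "\<And>b a. (b, a) \<in> (!) ps ` J \<Longrightarrow> (b, a) \<noteq> (b0, Max A) \<Longrightarrow> poly ((pderiv ^^ a) p) b = 0"
    using hermite_separating_poly[of "(!) ps ` J" b0 "Max A"] \<open>finite A\<close>
    unfolding A_def J_def by auto
  have "(\<Sum>j<length ps. x j * poly ((pderiv ^^ snd (ps ! j)) p) (fst (ps ! j))) =
        (\<Sum>j\<in>{j1}. x j * poly ((pderiv ^^ snd (ps ! j)) p) (fst (ps ! j)))"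
  proof (rule sum.mono_neutral_right)
    show "\<forall>j\<in>{..<length ps} - {j1}. x j * poly ((pderiv ^^ snd (ps ! j)) p) (fst (ps ! j)) = 0"
    proof
      fix j
      assume j: "j \<in> {..<length ps} - {j1}"
      then have "ps ! j \<noteq> ps ! j1"
        using j1(1) assms(1) by (simp add: J_def nth_eq_iff_index_eq)
      then show "x j * poly ((pderiv ^^ snd (ps ! j)) p) (fst (ps ! j)) = 0"
        using p(2)[of "fst (ps ! j)" "snd (ps ! j)"] j j1 by (auto simp: J_def)
    qed
  qed (use j1 in \<open>auto simp: J_def\<close>)
  then show False
    using zero[of p] p(1) j1 by (simp add: J_def)
qed

lemma ldet_eq_det: "ldet n A = det (mat n n (\<lambda>(i, j). A i j))"
proof -
  have "(\<Prod>i<n. mat n n (\<lambda>(i, j). A i j) $$ (i, p i)) = (\<Prod>i<n. A i (p i))" if "p permutes {..<n}" for p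
    using permutes_in_image[OF that] by (intro prod.cong) auto
  then show ?thesis
    unfolding ldet_def det_def by (simp add: atLeast0LessThan)
qed

lemma det_mat_eq_0_if_columns_eq:
  assumes "i < n" "j < n" "i \<noteq> j" "\<And>r. r < n \<Longrightarrow> A r i = A r j"
  shows "det (mat n n (\<lambda>(r, c). A r c)) = (0 :: 'a :: comm_ring_1)"
  by (rule det_identical_columns[of _ n i j]) (use assms in \<open>auto intro!: eq_vecI\<close>)

text \<open>The nodes (beta, a) of the kernels k_beta^(a) in \<open>shapiro_shields\<close>, in the same order:
  first (0, m0) for the leading kernel, then those of v_1, ..., v_N.\<close>
definition shapiro_shields_nodes :: "complex multiset \<Rightarrow> (complex \<times> nat) list" where
  "shapiro_shields_nodes Z =
     rev (map (Pair 0) [0..<Suc (count Z 0)]) @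
     concat (map (\<lambda>b. rev (map (Pair b) [0..<count Z b]))
       (SOME bs. distinct bs \<and> set bs = set_mset Z - {0}))"

lemma nonzero_points_list:
  "distinct (SOME bs. distinct bs \<and> set bs = set_mset Z - {0}) \<and>
   set (SOME bs. distinct bs \<and> set bs = set_mset Z - {0}) = set_mset Z - {0}"
  by (rule someI_ex) (use finite_distinct_list[of "set_mset Z - {0}"] in auto)

lemma distinct_shapiro_shields_nodes: "distinct (shapiro_shields_nodes Z)"
proof -
  define bs where "bs = (SOME bs. distinct bs \<and> set bs = set_mset Z - {0})"
  have bs: "distinct bs" "0 \<notin> set bs"
    using nonzero_points_list[of Z] by (simp_all add: bs_def)
  have "distinct (concat (map (\<lambda>b. rev (map (Pair b) [0..<count Z b])) bs))"
    using bs(1) by (induction bs) (auto simp: distinct_map inj_on_def)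
  then show ?thesis
    using bs(2) unfolding shapiro_shields_nodes_def bs_def[symmetric]
    by (auto simp: distinct_map inj_on_def)
qed

lemma set_shapiro_shields_nodes:
  assumes "(b, a) \<in> set (shapiro_shields_nodes Z)"
  shows "(b = 0 \<and> a \<le> count Z 0) \<or> (b \<in># Z \<and> b \<noteq> 0 \<and> a < count Z b)"
proof -
  define bs where "bs = (SOME bs. distinct bs \<and> set bs = set_mset Z - {0})"
  have bs: "set bs = set_mset Z - {0}"
    using nonzero_points_list[of Z] by (simp add: bs_def)
  have "(b = 0 \<and> a < Suc (count Z 0)) \<or> (b \<in> set bs \<and> a < count Z b)"
    using assms unfolding shapiro_shields_nodes_def bs_def[symmetric]
    by (auto simp del: upt_Suc simp add: image_iff)
  then show ?thesis
    using bs by (cases "b = 0") (auto simp: less_Suc_eq_le)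
qed

lemma shapiro_shields_nodes_nth_0:
  assumes "l \<le> count Z 0"
  shows "count Z 0 - l < length (shapiro_shields_nodes Z)"
    and "shapiro_shields_nodes Z ! (count Z 0 - l) = (0, l)"
proof -
  let ?zeros = "rev (map (Pair 0) [0..<Suc (count Z 0)])"
  have lt: "count Z 0 - l < length ?zeros" and val: "?zeros ! (count Z 0 - l) = (0, l)"
    using assms by (simp_all del: upt_Suc add: rev_nth)
  show "shapiro_shields_nodes Z ! (count Z 0 - l) = (0, l)"
    unfolding shapiro_shields_nodes_def nth_append_left[OF lt] by (rule val)
  show "count Z 0 - l < length (shapiro_shields_nodes Z)"
    using lt unfolding shapiro_shields_nodes_def length_append by (rule trans_less_add1)
qed

locale analytic_hilbert_space =
  fixes Om :: "complex set" and Hs :: "(complex \<Rightarrow> complex) set"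
    and ip :: "(complex \<Rightarrow> complex) \<Rightarrow> (complex \<Rightarrow> complex) \<Rightarrow> complex"
  assumes analytic_hilbert: "analytic_hilbert Om Hs ip"
begin

lemma standing_assumptions:
  "open Om" "0 \<in> Om"
  "\<forall>f\<in>Hs. f holomorphic_on Om \<and> (\<forall>z. z \<notin> Om \<longrightarrow> f z = 0)"
  "(\<lambda>z. 0) \<in> Hs"
  "\<forall>f\<in>Hs. \<forall>g\<in>Hs. (\<lambda>z. f z + g z) \<in> Hs"
  "\<forall>f\<in>Hs. \<forall>c. (\<lambda>z. c * f z) \<in> Hs"
  "\<forall>f\<in>Hs. \<forall>g\<in>Hs. \<forall>h\<in>Hs. ip (\<lambda>z. f z + g z) h = ip f h + ip g h"
  "\<forall>f\<in>Hs. \<forall>g\<in>Hs. \<forall>c. ip (\<lambda>z. c * f z) g = c * ip f g"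
  "\<forall>f\<in>Hs. \<forall>g\<in>Hs. ip f g = cnj (ip g f)"
  "\<forall>f\<in>Hs. Re (ip f f) \<ge> 0"
  "\<forall>f\<in>Hs. ip f f = 0 \<longrightarrow> f = (\<lambda>z. 0)"
  "\<forall>X :: nat \<Rightarrow> complex \<Rightarrow> complex. (\<forall>n. X n \<in> Hs) \<and>
      (\<forall>e>0. \<exists>N. \<forall>m\<ge>N. \<forall>n\<ge>N. hnorm ip (\<lambda>z. X m z - X n z) < e)
    \<longrightarrow> (\<exists>f\<in>Hs. \<forall>e>0. \<exists>N. \<forall>n\<ge>N. hnorm ip (\<lambda>z. X n z - f z) < e)"
  "\<forall>w\<in>Om. \<exists>C. \<forall>f\<in>Hs. cmod (f w) \<le> C * hnorm ip f"
  "\<forall>f\<in>Hs. (\<lambda>z. z * f z) \<in> Hs"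
  "\<exists>C. \<forall>f\<in>Hs. hnorm ip (\<lambda>z. z * f z) \<le> C * hnorm ip f"
  "\<forall>p. polyfun Om p \<in> Hs"
  "\<forall>f\<in>Hs. \<forall>e>0. \<exists>p. hnorm ip (\<lambda>z. f z - polyfun Om p z) < e"
  using analytic_hilbert unfolding analytic_hilbert_def by - (elim conjE, assumption)+

lemma open_Om: "open Om" and zero_in_Om: "0 \<in> Om"
  using standing_assumptions(1,2) .

lemma holomorphic_on_Om: "f \<in> Hs \<Longrightarrow> f holomorphic_on Om"
  using standing_assumptions(3) by blast

lemma zero_mem: "(\<lambda>z. 0) \<in> Hs"
  using standing_assumptions(4) .

lemma add_mem: "f \<in> Hs \<Longrightarrow> g \<in> Hs \<Longrightarrow> (\<lambda>z. f z + g z) \<in> Hs"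
  using standing_assumptions(5) by blast

lemma scale_mem: "f \<in> Hs \<Longrightarrow> (\<lambda>z. c * f z) \<in> Hs"
  using standing_assumptions(6) by blast

lemma ip_add_left: "f \<in> Hs \<Longrightarrow> g \<in> Hs \<Longrightarrow> h \<in> Hs \<Longrightarrow> ip (\<lambda>z. f z + g z) h = ip f h + ip g h"
  using standing_assumptions(7) by blast

lemma ip_scale_left: "f \<in> Hs \<Longrightarrow> g \<in> Hs \<Longrightarrow> ip (\<lambda>z. c * f z) g = c * ip f g"
  using standing_assumptions(8) by blast

lemma ip_commute: "f \<in> Hs \<Longrightarrow> g \<in> Hs \<Longrightarrow> ip f g = cnj (ip g f)"
  using standing_assumptions(9) by blast

lemma ip_self_nonneg: "f \<in> Hs \<Longrightarrow> Re (ip f f) \<ge> 0"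
  using standing_assumptions(10) by blast

lemma ip_self_eq_0: "f \<in> Hs \<Longrightarrow> ip f f = 0 \<Longrightarrow> f = (\<lambda>z. 0)"
  using standing_assumptions(11) by blast

lemma complete:
  fixes X :: "nat \<Rightarrow> complex \<Rightarrow> complex"
  assumes "\<And>n. X n \<in> Hs"
    and "\<And>e. e > 0 \<Longrightarrow> \<exists>K. \<forall>m\<ge>K. \<forall>n\<ge>K. hnorm ip (\<lambda>z. X m z - X n z) < e"
  obtains f where "f \<in> Hs" "\<And>e. e > 0 \<Longrightarrow> \<exists>K. \<forall>n\<ge>K. hnorm ip (\<lambda>z. X n z - f z) < e"
  using standing_assumptions(12) assms by blast

lemma pointeval_bounded: "w \<in> Om \<Longrightarrow> \<exists>C. \<forall>f\<in>Hs. cmod (f w) \<le> C * hnorm ip f"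
  using standing_assumptions(13) by blast

lemma shift_mem: "f \<in> Hs \<Longrightarrow> (\<lambda>z. z * f z) \<in> Hs"
  using standing_assumptions(14) by blast

lemma shift_bounded: "\<exists>C. \<forall>f\<in>Hs. hnorm ip (\<lambda>z. z * f z) \<le> C * hnorm ip f"
  using standing_assumptions(15) .

lemma polyfun_mem: "polyfun Om p \<in> Hs"
  using standing_assumptions(16) by blast

lemma polyfun_dense: "f \<in> Hs \<Longrightarrow> e > 0 \<Longrightarrow> \<exists>p. hnorm ip (\<lambda>z. f z - polyfun Om p z) < e"
  using standing_assumptions(17) by blast

lemma neg_mem: "f \<in> Hs \<Longrightarrow> (\<lambda>z. - f z) \<in> Hs"
  using scale_mem[of f "-1"] by simp

lemma diff_mem: "f \<in> Hs \<Longrightarrow> g \<in> Hs \<Longrightarrow> (\<lambda>z. f z - g z) \<in> Hs"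
  using add_mem[OF _ neg_mem[of g], of f] by simp

lemma sum_mem:
  "finite A \<Longrightarrow> (\<And>i. i \<in> A \<Longrightarrow> f i \<in> Hs) \<Longrightarrow> (\<lambda>z. \<Sum>i\<in>A. c i * f i z) \<in> Hs"
  by (induction A rule: finite_induct) (auto intro!: zero_mem add_mem scale_mem)

lemma ip_zero_left: "g \<in> Hs \<Longrightarrow> ip (\<lambda>z. 0) g = 0"
  using ip_scale_left[OF zero_mem, of g 0] by simp

lemma ip_add_right:
  assumes "f \<in> Hs" "g \<in> Hs" "h \<in> Hs"
  shows "ip h (\<lambda>z. f z + g z) = ip h f + ip h g"
  using assms by (simp add: ip_commute[of h] add_mem ip_add_left)

lemma ip_scale_right:
  assumes "f \<in> Hs" "g \<in> Hs"
  shows "ip f (\<lambda>z. c * g z) = cnj c * ip f g"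
  using assms by (simp add: ip_commute[of f] scale_mem ip_scale_left)

lemma ip_zero_right: "f \<in> Hs \<Longrightarrow> ip f (\<lambda>z. 0) = 0"
  using ip_scale_right[OF _ zero_mem, of f 0] by simp

lemma ip_diff_left: "f \<in> Hs \<Longrightarrow> g \<in> Hs \<Longrightarrow> h \<in> Hs \<Longrightarrow> ip (\<lambda>z. f z - g z) h = ip f h - ip g h"
  using ip_add_left[OF _ neg_mem[of g], of f h] ip_scale_left[of g h "-1"] by simp

lemma ip_diff_right: "f \<in> Hs \<Longrightarrow> g \<in> Hs \<Longrightarrow> h \<in> Hs \<Longrightarrow> ip h (\<lambda>z. f z - g z) = ip h f - ip h g"
  using ip_add_right[OF _ neg_mem[of g], of f h] ip_scale_right[of h g "-1"] by simp

lemma ip_sum_left: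
  "finite A \<Longrightarrow> (\<And>i. i \<in> A \<Longrightarrow> f i \<in> Hs) \<Longrightarrow> h \<in> Hs \<Longrightarrow>
   ip (\<lambda>z. \<Sum>i\<in>A. c i * f i z) h = (\<Sum>i\<in>A. c i * ip (f i) h)"
  by (induction A rule: finite_induct)
    (simp_all add: ip_zero_left ip_add_left ip_scale_left scale_mem sum_mem)

lemma ip_sum_right:
  "finite A \<Longrightarrow> (\<And>i. i \<in> A \<Longrightarrow> f i \<in> Hs) \<Longrightarrow> h \<in> Hs \<Longrightarrow>
   ip h (\<lambda>z. \<Sum>i\<in>A. c i * f i z) = (\<Sum>i\<in>A. cnj (c i) * ip h (f i))"
  by (induction A rule: finite_induct)
    (simp_all add: ip_zero_right ip_add_right ip_scale_right scale_mem sum_mem)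

definition sqnorm :: "(complex \<Rightarrow> complex) \<Rightarrow> real" where
  "sqnorm f = Re (ip f f)"

lemma ip_self:
  assumes "f \<in> Hs"
  shows "ip f f = of_real (sqnorm f)"
proof -
  have "ip f f = cnj (ip f f)"
    using ip_commute[OF assms assms] .
  then have "Im (ip f f) = 0"
    by (simp add: complex_eq_iff)
  then show ?thesis
    by (simp add: complex_eq_iff sqnorm_def)
qed

lemma sqnorm_nonneg: "f \<in> Hs \<Longrightarrow> sqnorm f \<ge> 0"
  using ip_self_nonneg by (simp add: sqnorm_def)

lemma hnorm_sqnorm: "hnorm ip f = sqrt (sqnorm f)"
  by (simp add: hnorm_def sqnorm_def)

lemma hnorm_nonneg: "f \<in> Hs \<Longrightarrow> hnorm ip f \<ge> 0"
  by (simp add: hnorm_sqnorm sqnorm_nonneg)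

lemma hnorm_power2: "f \<in> Hs \<Longrightarrow> (hnorm ip f)\<^sup>2 = sqnorm f"
  by (simp add: hnorm_sqnorm sqnorm_nonneg)

lemma sqnorm_eq_0: "f \<in> Hs \<Longrightarrow> sqnorm f = 0 \<Longrightarrow> f = (\<lambda>z. 0)"
  using ip_self ip_self_eq_0 by auto

lemma hnorm_eq_0: "f \<in> Hs \<Longrightarrow> hnorm ip f = 0 \<Longrightarrow> f = (\<lambda>z. 0)"
  using sqnorm_eq_0 by (simp add: hnorm_sqnorm)

lemma hnorm_bound_abs: "f \<in> Hs \<Longrightarrow> x \<le> C * hnorm ip f \<Longrightarrow> x \<le> \<bar>C\<bar> * hnorm ip f"
  by (meson abs_ge_self hnorm_nonneg mult_right_mono order_trans)

lemma sqnorm_diff_scale: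
  assumes "f \<in> Hs" "g \<in> Hs"
  shows "sqnorm (\<lambda>z. f z - t * g z) =
    sqnorm f - 2 * Re (cnj t * ip f g) + (cmod t)\<^sup>2 * sqnorm g"
proof -
  have tg: "(\<lambda>z. t * g z) \<in> Hs"
    using assms(2) by (rule scale_mem)
  have "ip (\<lambda>z. f z - t * g z) (\<lambda>z. f z - t * g z) =
      ip f (\<lambda>z. f z - t * g z) - ip (\<lambda>z. t * g z) (\<lambda>z. f z - t * g z)"
    using assms(1) tg diff_mem[OF assms(1) tg] by (rule ip_diff_left)
  also have "\<dots> = ip f f - cnj t * ip f g - t * (ip g f - cnj t * ip g g)"
    using assms tg by (simp add: ip_diff_right ip_scale_left ip_scale_right algebra_simps)
  also have "\<dots> = ip f f - cnj t * ip f g - t * cnj (ip f g) + t * cnj t * of_real (sqnorm g)"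
    using ip_commute[OF assms(2,1)] ip_self[OF assms(2)] by (simp add: algebra_simps)
  finally show ?thesis
    unfolding sqnorm_def[of "\<lambda>z. f z - t * g z"] ip_self[OF assms(1)]
    by (simp add: cmod_power2 complex_mult_cnj)
qed

lemma sqnorm_diff_optimal_scale:
  assumes "f \<in> Hs" "g \<in> Hs" "sqnorm g > 0"
  shows "sqnorm (\<lambda>z. f z - (ip f g / of_real (sqnorm g)) * g z) =
    sqnorm f - (cmod (ip f g))\<^sup>2 / sqnorm g"
proof -
  define c q where "c = ip f g" and "q = sqnorm g"
  have "cnj (c / of_real q) * c = of_real ((cmod c)\<^sup>2 / q)"
    using complex_norm_square by auto
  moreover have "(cmod (c / of_real q))\<^sup>2 * q = (cmod c)\<^sup>2 / q"
    using assms(3) by (simp add: q_def norm_divide power_divide power2_eq_square)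
  moreover have "sqnorm (\<lambda>z. f z - (c / of_real q) * g z) =
      sqnorm f - 2 * Re (cnj (c / of_real q) * c) + (cmod (c / of_real q))\<^sup>2 * q"
    unfolding c_def q_def by (rule sqnorm_diff_scale[OF assms(1,2)])
  ultimately show ?thesis
    unfolding c_def[symmetric] q_def[symmetric] by (simp only: Re_complex_of_real)
qed

lemma cauchy_schwarz:
  assumes "f \<in> Hs" "g \<in> Hs"
  shows "cmod (ip f g) \<le> hnorm ip f * hnorm ip g"
proof (cases "sqnorm g = 0")
  case True
  then have "g = (\<lambda>z. 0)"
    using assms(2) by (rule sqnorm_eq_0[rotated])
  then show ?thesis
    using assms by (simp add: ip_zero_right hnorm_nonneg)
next
  case False
  then have g: "sqnorm g > 0"
    using sqnorm_nonneg[OF assms(2)] by simp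
  have "0 \<le> sqnorm f - (cmod (ip f g))\<^sup>2 / sqnorm g"
    unfolding sqnorm_diff_optimal_scale[OF assms g, symmetric]
    using assms by (intro sqnorm_nonneg diff_mem scale_mem)
  then have "(cmod (ip f g))\<^sup>2 \<le> sqnorm f * sqnorm g"
    using g by (simp add: field_simps)
  also have "\<dots> = (hnorm ip f * hnorm ip g)\<^sup>2"
    using assms by (simp add: hnorm_power2 power_mult_distrib)
  finally show ?thesis
    by (rule power2_le_imp_le) (simp add: assms hnorm_nonneg)
qed

lemma ip_eq_0_if_nearest:
  assumes "h \<in> Hs" "f \<in> Hs" and nearest: "\<And>t. sqnorm h \<le> sqnorm (\<lambda>z. h z - t * f z)"
  shows "ip h f = 0"
proof (cases "sqnorm f = 0")
  case True
  then have "f = (\<lambda>z. 0)"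
    using assms(2) by (rule sqnorm_eq_0[rotated])
  then show ?thesis
    using assms by (simp add: ip_zero_right)
next
  case False
  then have "sqnorm f > 0"
    using sqnorm_nonneg[OF assms(2)] by simp
  then have "(cmod (ip h f))\<^sup>2 / sqnorm f \<le> 0"
    using nearest[of "ip h f / of_real (sqnorm f)"] sqnorm_diff_optimal_scale[OF assms(1,2)] by simp
  then show ?thesis
    using \<open>sqnorm f > 0\<close> by (simp add: divide_le_0_iff)
qed

lemma sqnorm_add:
  assumes "f \<in> Hs" "g \<in> Hs"
  shows "sqnorm (\<lambda>z. f z + g z) = sqnorm f + sqnorm g + 2 * Re (ip f g)"
  using assms sqnorm_diff_scale[OF assms, of "-1"] by simp

lemma sqnorm_scale: "f \<in> Hs \<Longrightarrow> sqnorm (\<lambda>z. c * f z) = (cmod c)\<^sup>2 * sqnorm f"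
  using sqnorm_diff_scale[OF zero_mem, of f "-c"] by (simp add: sqnorm_def ip_zero_left zero_mem)

lemma hnorm_scale: "f \<in> Hs \<Longrightarrow> hnorm ip (\<lambda>z. c * f z) = cmod c * hnorm ip f"
  by (simp add: hnorm_sqnorm sqnorm_scale real_sqrt_mult)

lemma hnorm_diff_commute: "f \<in> Hs \<Longrightarrow> g \<in> Hs \<Longrightarrow> hnorm ip (\<lambda>z. f z - g z) = hnorm ip (\<lambda>z. g z - f z)"
  using hnorm_scale[OF diff_mem, of g f "-1"] by simp

lemma hnorm_triangle:
  assumes "f \<in> Hs" "g \<in> Hs"
  shows "hnorm ip (\<lambda>z. f z + g z) \<le> hnorm ip f + hnorm ip g"
proof (rule power2_le_imp_le)
  have "(hnorm ip (\<lambda>z. f z + g z))\<^sup>2 = sqnorm f + sqnorm g + 2 * Re (ip f g)"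
    using assms by (simp add: hnorm_power2 add_mem sqnorm_add)
  also have "\<dots> \<le> sqnorm f + sqnorm g + 2 * (hnorm ip f * hnorm ip g)"
    using complex_Re_le_cmod[of "ip f g"] cauchy_schwarz[OF assms] by linarith
  also have "\<dots> = (hnorm ip f + hnorm ip g)\<^sup>2"
    using assms by (simp add: hnorm_power2 power2_sum)
  finally show "(hnorm ip (\<lambda>z. f z + g z))\<^sup>2 \<le> (hnorm ip f + hnorm ip g)\<^sup>2" .
  show "0 \<le> hnorm ip f + hnorm ip g"
    using assms by (simp add: hnorm_nonneg)
qed

lemma hnorm_triangle_diff:
  assumes "f \<in> Hs" "g \<in> Hs" "h \<in> Hs"
  shows "hnorm ip (\<lambda>z. f z - h z) \<le> hnorm ip (\<lambda>z. f z - g z) + hnorm ip (\<lambda>z. g z - h z)"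
  using hnorm_triangle[OF diff_mem[OF assms(1,2)] diff_mem[OF assms(2,3)]] by simp

lemma parallelogram:
  assumes "f \<in> Hs" "g \<in> Hs"
  shows "sqnorm (\<lambda>z. f z + g z) + sqnorm (\<lambda>z. f z - g z) = 2 * sqnorm f + 2 * sqnorm g"
  using sqnorm_add[OF assms] sqnorm_diff_scale[OF assms, of 1] by simp

lemma hnorm_LIMSEQ_0_iff:
  assumes "\<And>n. X n \<in> Hs" "f \<in> Hs"
  shows "(\<lambda>n. hnorm ip (\<lambda>z. X n z - f z)) \<longlonglongrightarrow> 0 \<longleftrightarrow>
    (\<forall>e>0. \<exists>K. \<forall>n\<ge>K. hnorm ip (\<lambda>z. X n z - f z) < e)"
  using assms by (simp add: LIMSEQ_iff hnorm_nonneg diff_mem)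

lemma Cauchy_of_sqnorm_bound:
  assumes "\<And>n. X n \<in> Hs" "d \<longlonglongrightarrow> 0"
    and bound: "\<And>m n. sqnorm (\<lambda>z. X m z - X n z) \<le> d m + d n"
    and "e > 0"
  shows "\<exists>K. \<forall>m\<ge>K. \<forall>n\<ge>K. hnorm ip (\<lambda>z. X m z - X n z) < e"
proof -
  obtain K where K: "\<And>n. n \<ge> K \<Longrightarrow> \<bar>d n\<bar> < e\<^sup>2 / 2"
    using LIMSEQ_iff[THEN iffD1, OF \<open>d \<longlonglongrightarrow> 0\<close>, rule_format, of "e\<^sup>2 / 2"] \<open>e > 0\<close> by auto
  have "hnorm ip (\<lambda>z. X m z - X n z) < e" if "m \<ge> K" "n \<ge> K" for m n
  proof -
    have "sqnorm (\<lambda>z. X m z - X n z) < e\<^sup>2"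
      using bound[of m n] K[OF that(1)] K[OF that(2)] by linarith
    then have "sqrt (sqnorm (\<lambda>z. X m z - X n z)) < sqrt (e\<^sup>2)"
      by (rule real_sqrt_less_mono)
    then show ?thesis
      using \<open>e > 0\<close> by (simp add: hnorm_sqnorm)
  qed
  then show ?thesis by blast
qed

text \<open>The parallelogram law, applied to g - a and g - b.\<close>
lemma sqnorm_diff_le_of_midpoint:
  assumes "g \<in> Hs" "a \<in> Hs" "b \<in> Hs" "\<delta> \<le> sqnorm (\<lambda>z. g z - (a z + b z) / 2)"
  shows "sqnorm (\<lambda>z. a z - b z) \<le>
    2 * (sqnorm (\<lambda>z. g z - a z) - \<delta>) + 2 * (sqnorm (\<lambda>z. g z - b z) - \<delta>)"
proof -
  have mid: "(\<lambda>z. (a z + b z) / 2) \<in> Hs"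
    using scale_mem[OF add_mem[OF assms(2,3)], of "1/2"] by simp
  have "sqnorm (\<lambda>z. (g z - a z) + (g z - b z)) = sqnorm (\<lambda>z. 2 * (g z - (a z + b z) / 2))"
    by (rule arg_cong[where f = sqnorm]) (simp add: fun_eq_iff field_simps)
  also have "\<dots> = 4 * sqnorm (\<lambda>z. g z - (a z + b z) / 2)"
    using sqnorm_scale[OF diff_mem[OF assms(1) mid], of 2] by simp
  finally have "sqnorm (\<lambda>z. (g z - a z) + (g z - b z)) \<ge> 4 * \<delta>"
    using assms(4) by simp
  moreover have "sqnorm (\<lambda>z. (g z - a z) - (g z - b z)) = sqnorm (\<lambda>z. a z - b z)"
    using hnorm_diff_commute[OF assms(2,3)] assms(2,3)
    by (simp add: hnorm_sqnorm diff_mem sqnorm_nonneg)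
  ultimately show ?thesis
    using parallelogram[OF diff_mem[OF assms(1,2)] diff_mem[OF assms(1,3)]] by argo
qed

lemma minimizing_sequence_Cauchy:
  assumes g: "g \<in> Hs" and \<sigma>: "\<And>n. \<sigma> n \<in> Hs"
    and mid: "\<And>a b. \<delta> \<le> sqnorm (\<lambda>z. g z - (\<sigma> a z + \<sigma> b z) / 2)"
    and near: "\<And>n. sqnorm (\<lambda>z. g z - \<sigma> n z) < \<delta> + inverse (real (Suc n))"
    and "e > 0"
  shows "\<exists>K. \<forall>a\<ge>K. \<forall>b\<ge>K. hnorm ip (\<lambda>z. \<sigma> a z - \<sigma> b z) < e"
proof (rule Cauchy_of_sqnorm_bound[OF \<sigma> _ _ \<open>e > 0\<close>])
  show "(\<lambda>n. 2 * inverse (real (Suc n))) \<longlonglongrightarrow> 0"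
    using tendsto_mult_right_zero[OF LIMSEQ_inverse_real_of_nat] by simp
  show "sqnorm (\<lambda>z. \<sigma> a z - \<sigma> b z) \<le> 2 * inverse (real (Suc a)) + 2 * inverse (real (Suc b))"
    for a b
    using sqnorm_diff_le_of_midpoint[OF g \<sigma>[of a] \<sigma>[of b] mid[of a b]] near[of a] near[of b]
    by argo
qed

lemma sqnorm_le_of_LIMSEQ:
  assumes g: "g \<in> Hs" and \<sigma>: "\<And>n. \<sigma> n \<in> Hs" and m: "m \<in> Hs"
    and lim: "(\<lambda>n. hnorm ip (\<lambda>z. \<sigma> n z - m z)) \<longlonglongrightarrow> 0"
    and dist: "(\<lambda>n. sqnorm (\<lambda>z. g z - \<sigma> n z)) \<longlonglongrightarrow> \<delta>"
  shows "sqnorm (\<lambda>z. g z - m z) \<le> \<delta>"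
proof -
  have "(\<lambda>n. hnorm ip (\<lambda>z. g z - \<sigma> n z) + hnorm ip (\<lambda>z. \<sigma> n z - m z)) \<longlonglongrightarrow> sqrt \<delta> + 0"
    unfolding hnorm_sqnorm by (intro tendsto_add tendsto_real_sqrt dist lim[unfolded hnorm_sqnorm])
  then have "hnorm ip (\<lambda>z. g z - m z) \<le> sqrt \<delta> + 0"
    by (rule LIMSEQ_le_const) (use g \<sigma> m hnorm_triangle_diff in blast)
  then show ?thesis
    by (simp add: hnorm_sqnorm)
qed

lemma nearest_point_exists:
  assumes g: "g \<in> Hs" and M: "M \<subseteq> Hs" "M \<noteq> {}"
    and midpoint: "\<And>a b. a \<in> M \<Longrightarrow> b \<in> M \<Longrightarrow> (\<lambda>z. (a z + b z) / 2) \<in> M"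
    and closed: "\<And>\<sigma> m. (\<And>n. \<sigma> n \<in> M) \<Longrightarrow> m \<in> Hs \<Longrightarrow>
      (\<lambda>n. hnorm ip (\<lambda>z. \<sigma> n z - m z)) \<longlonglongrightarrow> 0 \<Longrightarrow> m \<in> M"
  shows "\<exists>m\<in>M. \<forall>m'\<in>M. sqnorm (\<lambda>z. g z - m z) \<le> sqnorm (\<lambda>z. g z - m' z)"
proof -
  define \<delta> where "\<delta> = (INF m\<in>M. sqnorm (\<lambda>z. g z - m z))"
  have bdd: "bdd_below ((\<lambda>m. sqnorm (\<lambda>z. g z - m z)) ` M)"
    using g M(1) by (intro bdd_belowI2[of _ 0]) (auto intro: sqnorm_nonneg diff_mem)
  have \<delta>_le: "\<delta> \<le> sqnorm (\<lambda>z. g z - m z)" if "m \<in> M" for m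
    unfolding \<delta>_def using bdd that by (rule cINF_lower)
  have "\<exists>m\<in>M. sqnorm (\<lambda>z. g z - m z) < \<delta> + inverse (real (Suc n))" for n
    using cINF_less_iff[OF M(2) bdd, of "\<delta> + inverse (real (Suc n))"]
    unfolding \<delta>_def[symmetric] by simp
  then obtain \<sigma> where \<sigma>: "\<And>n. \<sigma> n \<in> M"
    "\<And>n. sqnorm (\<lambda>z. g z - \<sigma> n z) < \<delta> + inverse (real (Suc n))"
    by metis
  have \<sigma>_mem: "\<sigma> n \<in> Hs" for n
    using \<sigma>(1) M(1) by blast
  obtain m where m: "m \<in> Hs"
    and "\<And>e. e > 0 \<Longrightarrow> \<exists>K. \<forall>n\<ge>K. hnorm ip (\<lambda>z. \<sigma> n z - m z) < e"
    using minimizing_sequence_Cauchy[OF g \<sigma>_mem \<delta>_le[OF midpoint[OF \<sigma>(1) \<sigma>(1)]] \<sigma>(2)]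
    by (rule complete[of \<sigma>, OF \<sigma>_mem]) blast+
  then have lim: "(\<lambda>n. hnorm ip (\<lambda>z. \<sigma> n z - m z)) \<longlonglongrightarrow> 0"
    unfolding hnorm_LIMSEQ_0_iff[OF \<sigma>_mem m] by blast
  have "(\<lambda>n. sqnorm (\<lambda>z. g z - \<sigma> n z)) \<longlonglongrightarrow> \<delta>"
  proof (rule tendsto_sandwich[OF _ _ tendsto_const LIMSEQ_inverse_real_of_nat_add])
    show "\<forall>\<^sub>F n in sequentially. \<delta> \<le> sqnorm (\<lambda>z. g z - \<sigma> n z)"
      by (intro always_eventually allI \<delta>_le \<sigma>(1))
    show "\<forall>\<^sub>F n in sequentially. sqnorm (\<lambda>z. g z - \<sigma> n z) \<le> \<delta> + inverse (real (Suc n))"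
      by (intro always_eventually allI less_imp_le \<sigma>(2))
  qed
  then have "sqnorm (\<lambda>z. g z - m z) \<le> \<delta>"
    by (rule sqnorm_le_of_LIMSEQ[OF g \<sigma>_mem m lim])
  then have "sqnorm (\<lambda>z. g z - m z) \<le> sqnorm (\<lambda>z. g z - m' z)" if "m' \<in> M" for m'
    using \<delta>_le[OF that] by (rule order_trans)
  then show ?thesis
    using closed[OF \<sigma>(1) m lim] by blast
qed

definition bounded_functional :: "((complex \<Rightarrow> complex) \<Rightarrow> complex) \<Rightarrow> bool" where
  "bounded_functional L \<longleftrightarrow>
     (\<forall>f\<in>Hs. \<forall>g\<in>Hs. L (\<lambda>z. f z + g z) = L f + L g) \<and>
     (\<forall>f\<in>Hs. \<forall>c. L (\<lambda>z. c * f z) = c * L f) \<and>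
     (\<exists>C. \<forall>f\<in>Hs. cmod (L f) \<le> C * hnorm ip f)"

lemma reproducible_iff_bounded_functional:
  "reproducible Om Hs ip \<beta> m \<longleftrightarrow>
     (\<exists>L. bounded_functional L \<and> (\<forall>p. L (polyfun Om p) = poly ((pderiv ^^ m) p) \<beta>))"
  unfolding reproducible_def bounded_functional_def by blast

lemma bounded_functional_add:
  "bounded_functional L \<Longrightarrow> f \<in> Hs \<Longrightarrow> g \<in> Hs \<Longrightarrow> L (\<lambda>z. f z + g z) = L f + L g"
  and bounded_functional_scale:
  "bounded_functional L \<Longrightarrow> f \<in> Hs \<Longrightarrow> L (\<lambda>z. c * f z) = c * L f"
  by (simp_all add: bounded_functional_def)

lemma bounded_functional_diff:
  "bounded_functional L \<Longrightarrow> f \<in> Hs \<Longrightarrow> g \<in> Hs \<Longrightarrow> L (\<lambda>z. f z - g z) = L f - L g"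
  using bounded_functional_add[OF _ _ neg_mem, of L f g] bounded_functional_scale[of L g "-1"]
  by simp

lemma bounded_functional_bound:
  assumes "bounded_functional L"
  obtains C where "C \<ge> 0" "\<And>f. f \<in> Hs \<Longrightarrow> cmod (L f) \<le> C * hnorm ip f"
proof -
  obtain C where "\<forall>f\<in>Hs. cmod (L f) \<le> C * hnorm ip f"
    using assms by (auto simp: bounded_functional_def)
  then show ?thesis
    using that[of "\<bar>C\<bar>"] hnorm_bound_abs by simp
qed

lemma bounded_functional_kernel_closed:
  assumes L: "bounded_functional L" and \<sigma>: "\<And>n. \<sigma> n \<in> Hs" "\<And>n. L (\<sigma> n) = 0" and m: "m \<in> Hs"
    and lim: "(\<lambda>n. hnorm ip (\<lambda>z. \<sigma> n z - m z)) \<longlonglongrightarrow> 0"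
  shows "L m = 0"
proof -
  obtain C where C: "\<And>f. f \<in> Hs \<Longrightarrow> cmod (L f) \<le> C * hnorm ip f"
    using bounded_functional_bound[OF L] by blast
  have bound: "cmod (L m) \<le> C * hnorm ip (\<lambda>z. \<sigma> n z - m z)" for n
    using C[OF diff_mem[OF \<sigma>(1) m]] bounded_functional_diff[OF L \<sigma>(1) m] \<sigma>(2) by simp
  have "cmod (L m) \<le> 0"
    by (rule LIMSEQ_le_const[OF tendsto_mult_right_zero[OF lim]]) (use bound in auto)
  then show ?thesis by simp
qed

lemma bounded_functional_eq_ip_of_orthogonal:
  assumes L: "bounded_functional L" and h: "h \<in> Hs" "L h = 1"
    and orth: "\<And>f. f \<in> Hs \<Longrightarrow> L f = 0 \<Longrightarrow> ip h f = 0" and f: "f \<in> Hs"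
  shows "L f = ip f (\<lambda>z. of_real (inverse (sqnorm h)) * h z)"
proof -
  have "sqnorm h \<noteq> 0"
    using h sqnorm_eq_0[OF h(1)] bounded_functional_scale[OF L zero_mem, of 0] by auto
  then have h_pos: "sqnorm h > 0"
    using sqnorm_nonneg[OF h(1)] by simp
  have "L (\<lambda>z. f z - L f * h z) = 0"
    using f h bounded_functional_diff[OF L] bounded_functional_scale[OF L] by (simp add: scale_mem)
  then have "ip (\<lambda>z. f z - L f * h z) h = 0"
    using orth ip_commute[OF diff_mem[OF f scale_mem[OF h(1)]] h(1)] f h(1) by (simp add: diff_mem scale_mem)
  then have "ip f h = L f * of_real (sqnorm h)"
    using f h(1) by (simp add: ip_diff_left scale_mem ip_scale_left ip_self)
  then show ?thesis
    using f h(1) h_pos by (simp add: ip_scale_right)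
qed

text \<open>Project g with L g = 1 onto the kernel of L; the difference h is orthogonal to the kernel,
  and a multiple of h represents L.\<close>
lemma riesz_representation:
  assumes L: "bounded_functional L"
  obtains k where "k \<in> Hs" "\<And>f. f \<in> Hs \<Longrightarrow> L f = ip f k"
proof (cases "\<forall>f\<in>Hs. L f = 0")
  case True
  then show ?thesis
    using that[of "\<lambda>z. 0"] zero_mem ip_zero_right by simp
next
  case False
  then obtain g0 where g0: "g0 \<in> Hs" "L g0 \<noteq> 0" by blast
  define g where "g = (\<lambda>z. inverse (L g0) * g0 z)"
  have g: "g \<in> Hs" "L g = 1"
    using g0 bounded_functional_scale[OF L] by (simp_all add: g_def scale_mem)
  define M where "M = {m \<in> Hs. L m = 0}"
  have M: "M \<subseteq> Hs" "M \<noteq> {}"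
    using zero_mem bounded_functional_scale[OF L zero_mem, of 0] by (auto simp: M_def)
  have "\<exists>m\<in>M. \<forall>m'\<in>M. sqnorm (\<lambda>z. g z - m z) \<le> sqnorm (\<lambda>z. g z - m' z)"
  proof (rule nearest_point_exists[OF g(1) M])
    show "(\<lambda>z. (a z + b z) / 2) \<in> M" if "a \<in> M" "b \<in> M" for a b
      using that bounded_functional_scale[OF L add_mem, of a b "1/2"] bounded_functional_add[OF L]
        add_mem scale_mem[of _ "1/2"] by (simp add: M_def)
    show "m \<in> M" if "\<And>n. \<sigma> n \<in> M" "m \<in> Hs"
      "(\<lambda>n. hnorm ip (\<lambda>z. \<sigma> n z - m z)) \<longlonglongrightarrow> 0" for \<sigma> m
      using bounded_functional_kernel_closed[OF L _ _ that(2,3)] that by (simp add: M_def)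
  qed
  then obtain m where m: "m \<in> M"
    "\<And>m'. m' \<in> M \<Longrightarrow> sqnorm (\<lambda>z. g z - m z) \<le> sqnorm (\<lambda>z. g z - m' z)"
    by blast
  define h where "h = (\<lambda>z. g z - m z)"
  have h: "h \<in> Hs" "L h = 1"
    using m(1) g bounded_functional_diff[OF L] by (auto simp: h_def M_def diff_mem)
  have "ip h f = 0" if "f \<in> Hs" "L f = 0" for f
  proof (rule ip_eq_0_if_nearest[OF h(1) that(1)])
    fix t
    have "(\<lambda>z. m z + t * f z) \<in> M"
      using m(1) that bounded_functional_add[OF L] bounded_functional_scale[OF L]
      by (simp add: M_def add_mem scale_mem)
    then show "sqnorm h \<le> sqnorm (\<lambda>z. h z - t * f z)"
      using m(2) by (simp add: h_def algebra_simps)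
  qed
  then show ?thesis
    using that[OF scale_mem[OF h(1)]] bounded_functional_eq_ip_of_orthogonal[OF L h] by blast
qed

lemma ip_polyfun_eq_0_imp_zero:
  assumes h: "h \<in> Hs" and orth: "\<And>p. ip (polyfun Om p) h = 0"
  shows "h = (\<lambda>z. 0)"
proof -
  have bound: "(hnorm ip h)\<^sup>2 \<le> e * hnorm ip h" if e: "e > 0" for e
  proof -
    obtain p where p: "hnorm ip (\<lambda>z. h z - polyfun Om p z) < e"
      using polyfun_dense[OF h e] by blast
    have "(hnorm ip h)\<^sup>2 = cmod (ip (\<lambda>z. h z - polyfun Om p z) h)"
      using h orth[of p] by (simp add: ip_diff_left polyfun_mem ip_self hnorm_power2 sqnorm_nonneg)
    also have "\<dots> \<le> hnorm ip (\<lambda>z. h z - polyfun Om p z) * hnorm ip h"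
      using h polyfun_mem by (intro cauchy_schwarz diff_mem)
    also have "\<dots> \<le> e * hnorm ip h"
      using p h by (intro mult_right_mono) (simp_all add: hnorm_nonneg)
    finally show ?thesis .
  qed
  show ?thesis
  proof (rule ccontr)
    assume "h \<noteq> (\<lambda>z. 0)"
    then have pos: "hnorm ip h > 0"
      using hnorm_eq_0[OF h] hnorm_nonneg[OF h] by fastforce
    then have "(hnorm ip h)\<^sup>2 \<le> (hnorm ip h)\<^sup>2 / 2"
      using bound[of "hnorm ip h / 2"] by (simp add: power2_eq_square)
    then show False
      using zero_less_power[OF pos, of 2] by linarith
  qed
qed

definition is_kernel :: "(complex \<Rightarrow> complex) \<Rightarrow> complex \<Rightarrow> nat \<Rightarrow> bool" where
  "is_kernel k \<beta> m \<longleftrightarrow> k \<in> Hs \<and> (\<forall>p. poly ((pderiv ^^ m) p) \<beta> = ip (polyfun Om p) k)"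

lemma is_kernel_unique:
  assumes "is_kernel k1 \<beta> m" "is_kernel k2 \<beta> m"
  shows "k1 = k2"
proof -
  have "(\<lambda>z. k1 z - k2 z) = (\<lambda>z. 0)"
    using assms by (intro ip_polyfun_eq_0_imp_zero)
      (simp_all add: is_kernel_def diff_mem ip_diff_right polyfun_mem)
  then show ?thesis
    by (simp add: fun_eq_iff)
qed

lemma kern_eq:
  assumes "is_kernel k \<beta> m"
  shows "kern Om Hs ip \<beta> m = k"
  unfolding kern_def is_kernel_def[symmetric]
  by (rule the_equality[where P = "\<lambda>k. is_kernel k \<beta> m", OF assms]) (rule is_kernel_unique[OF _ assms])

lemma is_kernel_of_bounded_functional:
  assumes L: "bounded_functional L" and "\<And>p. L (polyfun Om p) = poly ((pderiv ^^ m) p) \<beta>"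
  shows "is_kernel (kern Om Hs ip \<beta> m) \<beta> m" "\<And>f. f \<in> Hs \<Longrightarrow> L f = ip f (kern Om Hs ip \<beta> m)"
proof -
  obtain k where k: "k \<in> Hs" "\<And>f. f \<in> Hs \<Longrightarrow> L f = ip f k"
    using riesz_representation[OF L] by blast
  then have "is_kernel k \<beta> m"
    using assms(2) polyfun_mem by (simp add: is_kernel_def)
  then show "is_kernel (kern Om Hs ip \<beta> m) \<beta> m" "\<And>f. f \<in> Hs \<Longrightarrow> L f = ip f (kern Om Hs ip \<beta> m)"
    using k by (simp_all add: kern_eq)
qed

lemma is_kernel_kern: "reproducible Om Hs ip \<beta> m \<Longrightarrow> is_kernel (kern Om Hs ip \<beta> m) \<beta> m"
  using is_kernel_of_bounded_functional(1) by (auto simp: reproducible_iff_bounded_functional)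

lemma hnorm_zero: "hnorm ip (\<lambda>z. 0) = 0"
  by (simp add: hnorm_sqnorm sqnorm_def ip_zero_left zero_mem)

definition hdist :: "(complex \<Rightarrow> complex) \<Rightarrow> (complex \<Rightarrow> complex) \<Rightarrow> real" where
  "hdist f g = (if f \<in> Hs \<and> g \<in> Hs then hnorm ip (\<lambda>z. f z - g z) else 0)"

lemma Metric_space_hdist: "Metric_space Hs hdist"
proof
  fix x y z
  show "0 \<le> hdist x y"
    by (simp add: hdist_def hnorm_nonneg diff_mem)
  show "hdist x y = hdist y x"
    using hnorm_diff_commute[of x y] by (auto simp: hdist_def)
  show "hdist x y = 0 \<longleftrightarrow> x = y" if "x \<in> Hs" "y \<in> Hs"
  proof
    assume "hdist x y = 0"
    then have "(\<lambda>z. x z - y z) = (\<lambda>z. 0)"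
      using that by (intro hnorm_eq_0 diff_mem) (simp_all add: hdist_def)
    then show "x = y"
      by (simp add: fun_eq_iff)
  qed (simp add: hdist_def hnorm_zero)
  show "hdist x z \<le> hdist x y + hdist y z" if "x \<in> Hs" "y \<in> Hs" "z \<in> Hs"
    using that hnorm_triangle_diff by (simp add: hdist_def)
qed

sublocale H: Metric_space Hs hdist
  by (rule Metric_space_hdist)

lemma mcomplete_hdist: "H.mcomplete"
  unfolding H.mcomplete_def
proof (intro allI impI)
  fix \<sigma>
  assume "H.MCauchy \<sigma>"
  then have \<sigma>: "\<And>n. \<sigma> n \<in> Hs"
    and Cauchy: "\<forall>e>0. \<exists>K. \<forall>m n. K \<le> m \<longrightarrow> K \<le> n \<longrightarrow> hdist (\<sigma> m) (\<sigma> n) < e"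
    unfolding H.MCauchy_def by auto
  have "\<exists>K. \<forall>m\<ge>K. \<forall>n\<ge>K. hnorm ip (\<lambda>z. \<sigma> m z - \<sigma> n z) < e" if "e > 0" for e
    using Cauchy[rule_format, OF that] \<sigma> by (auto simp: hdist_def)
  then obtain f where f: "f \<in> Hs"
    and "\<And>e. e > 0 \<Longrightarrow> \<exists>K. \<forall>n\<ge>K. hnorm ip (\<lambda>z. \<sigma> n z - f z) < e"
    by (rule complete[of \<sigma>, OF \<sigma>]) blast+
  then have "(\<lambda>n. hnorm ip (\<lambda>z. \<sigma> n z - f z)) \<longlonglongrightarrow> 0"
    unfolding hnorm_LIMSEQ_0_iff[OF \<sigma> f] by blast
  then show "\<exists>f. limitin H.mtopology \<sigma> f sequentially"
    using f \<sigma> by (auto simp: H.limitin_metric_dist_null hdist_def)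
qed

lemma LIMSEQ_eval:
  assumes "w \<in> Om" "\<And>n. X n \<in> Hs" "f \<in> Hs" and lim: "(\<lambda>n. hnorm ip (\<lambda>z. X n z - f z)) \<longlonglongrightarrow> 0"
  shows "(\<lambda>n. X n w) \<longlonglongrightarrow> f w"
proof -
  obtain C where C: "\<forall>g\<in>Hs. cmod (g w) \<le> C * hnorm ip g"
    using pointeval_bounded[OF assms(1)] by blast
  have "(\<lambda>n. cmod (X n w - f w)) \<longlonglongrightarrow> 0"
  proof (rule tendsto_sandwich[OF _ _ tendsto_const tendsto_mult_right_zero[OF lim]])
    show "\<forall>\<^sub>F n in sequentially. 0 \<le> cmod (X n w - f w)"
      by simp
    show "\<forall>\<^sub>F n in sequentially. cmod (X n w - f w) \<le> C * hnorm ip (\<lambda>z. X n z - f z)"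
    proof (intro always_eventually allI)
      fix n
      show "cmod (X n w - f w) \<le> C * hnorm ip (\<lambda>z. X n z - f z)"
        using bspec[OF C diff_mem[OF assms(2)[of n] assms(3)]] by simp
    qed
  qed
  then show ?thesis
    by (simp add: tendsto_norm_zero_iff LIM_zero_iff)
qed

lemma closedin_eval_bounded:
  assumes "K \<subseteq> Om"
  shows "closedin H.mtopology {f \<in> Hs. \<forall>w\<in>K. cmod (f w) \<le> c}"
  unfolding H.metric_closedin_iff_sequentially_closed
proof (intro conjI allI impI)
  fix \<sigma> l
  assume a: "range \<sigma> \<subseteq> {f \<in> Hs. \<forall>w\<in>K. cmod (f w) \<le> c} \<and> limitin H.mtopology \<sigma> l sequentially"
  then have \<sigma>: "\<And>n. \<sigma> n \<in> Hs" "\<And>n w. w \<in> K \<Longrightarrow> cmod (\<sigma> n w) \<le> c"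
    by auto
  have l: "l \<in> Hs" and "(\<lambda>n. hdist (\<sigma> n) l) \<longlonglongrightarrow> 0"
    using a by (auto simp: H.limitin_metric_dist_null)
  then have lim: "(\<lambda>n. hnorm ip (\<lambda>z. \<sigma> n z - l z)) \<longlonglongrightarrow> 0"
    using \<sigma>(1) by (simp add: hdist_def)
  have "cmod (l w) \<le> c" if "w \<in> K" for w
    by (rule LIMSEQ_le_const2[OF tendsto_norm[OF LIMSEQ_eval[OF _ \<sigma>(1) l lim]]])
      (use \<sigma>(2) that assms in auto)
  then show "l \<in> {f \<in> Hs. \<forall>w\<in>K. cmod (f w) \<le> c}"
    using l by blast
qed auto

text \<open>Compare f0 with the point f0 + t g of the ball, where t = eps / (2 |g|).\<close>
lemma eval_bound_of_ball:
  assumes f0: "f0 \<in> Hs" and "\<epsilon> > 0"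
    and ball: "\<And>f. f \<in> Hs \<Longrightarrow> hnorm ip (\<lambda>z. f0 z - f z) < \<epsilon> \<Longrightarrow> cmod (f w) \<le> c"
    and g: "g \<in> Hs"
  shows "cmod (g w) \<le> 4 * c / \<epsilon> * hnorm ip g"
proof (cases "hnorm ip g = 0")
  case True
  then show ?thesis
    using hnorm_eq_0[OF g] by simp
next
  case False
  then have pos: "hnorm ip g > 0"
    using hnorm_nonneg[OF g] by simp
  define t where "t = \<epsilon> / (2 * hnorm ip g)"
  have t: "t > 0"
    using pos \<open>\<epsilon> > 0\<close> by (simp add: t_def)
  have "(\<lambda>z. f0 z - (f0 z + of_real t * g z)) = (\<lambda>z. of_real (- t) * g z)"
    by simp
  then have "hnorm ip (\<lambda>z. f0 z - (f0 z + of_real t * g z)) = t * hnorm ip g"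
    using hnorm_scale[OF g, of "of_real (- t)"] t by simp
  also have "\<dots> = \<epsilon> / 2"
    using pos by (simp add: t_def)
  finally have "hnorm ip (\<lambda>z. f0 z - (f0 z + of_real t * g z)) = \<epsilon> / 2" .
  then have "cmod (f0 w + of_real t * g w) \<le> c"
    using ball[of "\<lambda>z. f0 z + of_real t * g z"] f0 g \<open>\<epsilon> > 0\<close> by (simp add: add_mem scale_mem)
  moreover have "cmod (f0 w) \<le> c"
    using ball[OF f0] \<open>\<epsilon> > 0\<close> by (simp add: hnorm_zero)
  moreover have "cmod (of_real t * g w) \<le> cmod (f0 w + of_real t * g w) + cmod (f0 w)"
    by (metis add_diff_cancel_left' norm_triangle_ineq4 add.commute)
  ultimately have "t * cmod (g w) \<le> 2 * c"
    using t by (simp add: norm_mult)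
  then show ?thesis
    using t pos \<open>\<epsilon> > 0\<close> by (simp add: t_def field_simps)
qed

lemma bounded_on_compact:
  assumes f: "f \<in> Hs" and "compact K" "K \<subseteq> Om"
  shows "\<exists>n::nat. \<forall>w\<in>K. cmod (f w) \<le> real n"
proof -
  have "compact (f ` K)"
    using assms continuous_on_subset[OF holomorphic_on_imp_continuous_on[OF holomorphic_on_Om[OF f]]]
    by (intro compact_continuous_image) auto
  then obtain B where "\<forall>y\<in>f ` K. cmod y \<le> B"
    using compact_imp_bounded bounded_iff by metis
  then show ?thesis
    by (auto intro: order_trans[OF _ real_nat_ceiling_ge])
qed

lemma Baire_eval_bounded:
  assumes "compact K" "K \<subseteq> Om"
  shows "\<exists>n::nat. H.mtopology interior_of {f \<in> Hs. \<forall>w\<in>K. cmod (f w) \<le> real n} \<noteq> {}"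
proof (rule ccontr)
  define F where "F n = {f \<in> Hs. \<forall>w\<in>K. cmod (f w) \<le> real n}" for n :: nat
  assume "\<not> ?thesis"
  then have "H.mtopology interior_of \<Union> (range F) = {}"
    using closedin_eval_bounded[OF assms(2)]
    by (intro H.metric_Baire_category_alt[OF mcomplete_hdist]) (auto simp: F_def)
  moreover have "\<Union> (range F) = Hs"
  proof (intro equalityI subsetI)
    fix f
    assume f: "f \<in> Hs"
    then obtain n where "\<forall>w\<in>K. cmod (f w) \<le> real n"
      using bounded_on_compact[OF _ assms] by blast
    then show "f \<in> \<Union> (range F)"
      using f by (auto simp: F_def)
  qed (auto simp: F_def)
  ultimately show False
    using interior_of_topspace[of H.mtopology] zero_mem by simp
qed

lemma uniform_pointeval_bound:
  assumes "compact K" "K \<subseteq> Om"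
  obtains B where "\<And>f w. f \<in> Hs \<Longrightarrow> w \<in> K \<Longrightarrow> cmod (f w) \<le> B * hnorm ip f"
proof -
  define F where "F n = {f \<in> Hs. \<forall>w\<in>K. cmod (f w) \<le> real n}" for n :: nat
  obtain n f0 where f0: "f0 \<in> H.mtopology interior_of F n"
    using Baire_eval_bounded[OF assms] unfolding F_def by blast
  moreover have "openin H.mtopology (H.mtopology interior_of F n)"
    by (rule openin_interior_of)
  ultimately obtain \<epsilon> where \<epsilon>: "\<epsilon> > 0" "H.mball f0 \<epsilon> \<subseteq> H.mtopology interior_of F n"
    unfolding H.openin_mtopology by blast
  have "f0 \<in> Hs"
    using f0 interior_of_subset[of H.mtopology "F n"] by (auto simp: F_def)
  moreover have "cmod (f w) \<le> real n" if "f \<in> Hs" "hnorm ip (\<lambda>z. f0 z - f z) < \<epsilon>" "w \<in> K" for f w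
  proof -
    have "f \<in> H.mball f0 \<epsilon>"
      using that(1,2) \<open>f0 \<in> Hs\<close> by (simp add: hdist_def)
    then have "f \<in> F n"
      using \<epsilon>(2) interior_of_subset[of H.mtopology "F n"] by blast
    then show ?thesis
      using that(3) by (simp add: F_def)
  qed
  ultimately show ?thesis
    using that[of "4 * real n / \<epsilon>"] eval_bound_of_ball[OF _ \<epsilon>(1)] by blast
qed

lemma higher_deriv_polyfun_0: "(deriv ^^ l) (polyfun Om p) 0 = poly ((pderiv ^^ l) p) 0"
proof -
  have "(deriv ^^ l) (polyfun Om p) 0 = (deriv ^^ l) (poly p) 0"
  proof (rule higher_deriv_transform_within_open[OF holomorphic_on_Om[OF polyfun_mem] _ open_Om zero_in_Om])
    show "poly p holomorphic_on Om"
      using poly_holomorphic_on[of "\<lambda>z. z" Om p] by simp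
    show "polyfun Om p w = poly p w" if "w \<in> Om" for w
      using that by (simp add: polyfun_def)
  qed
  then show ?thesis
    by (simp add: higher_deriv_poly)
qed

lemma bounded_functionalI:
  assumes "\<And>f g. f \<in> Hs \<Longrightarrow> g \<in> Hs \<Longrightarrow> L (\<lambda>z. f z + g z) = L f + L g"
    and "\<And>f c. f \<in> Hs \<Longrightarrow> L (\<lambda>z. c * f z) = c * L f"
    and "\<And>f. f \<in> Hs \<Longrightarrow> cmod (L f) \<le> C * hnorm ip f"
  shows "bounded_functional L"
  unfolding bounded_functional_def using assms by blast

text \<open>Cauchy's inequality on a disc around 0, with the uniform bound on that disc.\<close>
lemma bounded_functional_higher_deriv_0: "bounded_functional (\<lambda>f. (deriv ^^ l) f 0)"
proof -
  obtain r where r: "r > 0" "cball 0 r \<subseteq> Om"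
    using open_Om zero_in_Om open_contains_cball by blast
  obtain B where B: "\<And>f w. f \<in> Hs \<Longrightarrow> w \<in> cball 0 r \<Longrightarrow> cmod (f w) \<le> B * hnorm ip f"
    using uniform_pointeval_bound[OF compact_cball r(2)] by blast
  show ?thesis
  proof (rule bounded_functionalI)
    fix f g c
    assume f: "f \<in> Hs"
    then have holo: "f holomorphic_on Om"
      by (rule holomorphic_on_Om)
    show "(deriv ^^ l) (\<lambda>z. c * f z) 0 = c * (deriv ^^ l) f 0"
      by (rule higher_deriv_cmult[OF holo zero_in_Om open_Om])
    show "(deriv ^^ l) (\<lambda>z. f z + g z) 0 = (deriv ^^ l) f 0 + (deriv ^^ l) g 0" if "g \<in> Hs"
      by (rule higher_deriv_add[OF holo holomorphic_on_Om[OF that] open_Om zero_in_Om])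
    have "cmod ((deriv ^^ l) f 0) \<le> fact l * (B * hnorm ip f) / r ^ l"
    proof (rule Cauchy_inequality)
      show "f holomorphic_on ball 0 r"
        using holo r(2) ball_subset_cball holomorphic_on_subset by blast
      show "continuous_on (cball 0 r) f"
        using holomorphic_on_imp_continuous_on[OF holo] r(2) continuous_on_subset by blast
      show "cmod (f w) \<le> B * hnorm ip f" if "cmod (0 - w) = r" for w
        using B[OF f, of w] that by (simp add: dist_norm)
    qed (use r in auto)
    then show "cmod ((deriv ^^ l) f 0) \<le> (fact l * B / r ^ l) * hnorm ip f"
      by simp
  qed
qed

lemma kern_0:
  shows "is_kernel (kern Om Hs ip 0 l) 0 l"
    and "\<And>f. f \<in> Hs \<Longrightarrow> (deriv ^^ l) f 0 = ip f (kern Om Hs ip 0 l)"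
  using is_kernel_of_bounded_functional[OF bounded_functional_higher_deriv_0 higher_deriv_polyfun_0]
  by blast+

lemma bounded_functional_shift:
  assumes L: "bounded_functional L"
  shows "bounded_functional (\<lambda>f. L (\<lambda>z. z * f z))"
proof -
  obtain C where C: "C \<ge> 0" "\<And>f. f \<in> Hs \<Longrightarrow> cmod (L f) \<le> C * hnorm ip f"
    using bounded_functional_bound[OF L] by blast
  obtain S where S: "\<forall>f\<in>Hs. hnorm ip (\<lambda>z. z * f z) \<le> S * hnorm ip f"
    using shift_bounded by blast
  show ?thesis
  proof (rule bounded_functionalI)
    fix f g c
    assume f: "f \<in> Hs"
    show "L (\<lambda>z. z * (f z + g z)) = L (\<lambda>z. z * f z) + L (\<lambda>z. z * g z)" if "g \<in> Hs"
      using bounded_functional_add[OF L shift_mem[OF f] shift_mem[OF that]]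
      by (simp add: distrib_left)
    show "L (\<lambda>z. z * (c * f z)) = c * L (\<lambda>z. z * f z)"
      using bounded_functional_scale[OF L shift_mem[OF f], of c] by (simp add: mult.left_commute)
    have "cmod (L (\<lambda>z. z * f z)) \<le> C * hnorm ip (\<lambda>z. z * f z)"
      using C(2) shift_mem[OF f] .
    also have "\<dots> \<le> C * (S * hnorm ip f)"
      using S f C(1) by (intro mult_left_mono) auto
    finally show "cmod (L (\<lambda>z. z * f z)) \<le> (C * S) * hnorm ip f"
      by (simp add: mult.assoc)
  qed
qed

lemma bounded_functional_lincomb:
  assumes L1: "bounded_functional L1" and L2: "bounded_functional L2"
  shows "bounded_functional (\<lambda>f. a * L1 f + b * L2 f)"
proof -
  obtain C1 where C1: "\<And>f. f \<in> Hs \<Longrightarrow> cmod (L1 f) \<le> C1 * hnorm ip f"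
    using bounded_functional_bound[OF L1] by blast
  obtain C2 where C2: "\<And>f. f \<in> Hs \<Longrightarrow> cmod (L2 f) \<le> C2 * hnorm ip f"
    using bounded_functional_bound[OF L2] by blast
  show ?thesis
  proof (rule bounded_functionalI)
    fix f g c
    assume f: "f \<in> Hs"
    show "a * L1 (\<lambda>z. f z + g z) + b * L2 (\<lambda>z. f z + g z) = a * L1 f + b * L2 f + (a * L1 g + b * L2 g)"
      if "g \<in> Hs"
      using f that by (simp add: bounded_functional_add[OF L1] bounded_functional_add[OF L2] algebra_simps)
    show "a * L1 (\<lambda>z. c * f z) + b * L2 (\<lambda>z. c * f z) = c * (a * L1 f + b * L2 f)"
      using f by (simp add: bounded_functional_scale[OF L1] bounded_functional_scale[OF L2] algebra_simps)
    have "cmod (a * L1 f + b * L2 f) \<le> cmod a * cmod (L1 f) + cmod b * cmod (L2 f)"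
      by (metis norm_mult norm_triangle_ineq)
    also have "\<dots> \<le> cmod a * (C1 * hnorm ip f) + cmod b * (C2 * hnorm ip f)"
      using C1[OF f] C2[OF f] by (intro add_mono mult_left_mono) auto
    finally show "cmod (a * L1 f + b * L2 f) \<le> (cmod a * C1 + cmod b * C2) * hnorm ip f"
      by (simp add: algebra_simps)
  qed
qed

text \<open>Since (z p)^(m+1) = z p^(m+1) + (m + 1) p^(m), the functional
  f |-> (L (z f) - beta L f) / (m + 1) represents p |-> p^(m)(beta).\<close>
lemma reproducible_Suc:
  assumes "reproducible Om Hs ip \<beta> (Suc m)"
  shows "reproducible Om Hs ip \<beta> m"
proof -
  obtain L where L: "bounded_functional L" "\<And>p. L (polyfun Om p) = poly ((pderiv ^^ Suc m) p) \<beta>"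
    using assms by (auto simp: reproducible_iff_bounded_functional)
  define c :: complex where "c = inverse (of_nat (Suc m))"
  have "c * L (\<lambda>z. z * polyfun Om p z) + (- c * \<beta>) * L (polyfun Om p) = poly ((pderiv ^^ m) p) \<beta>" for p
  proof -
    have "L (\<lambda>z. z * polyfun Om p z) = L (polyfun Om ([:0, 1:] * p))"
      by (rule arg_cong[where f = L]) (auto simp: polyfun_def)
    also have "\<dots> = poly ((pderiv ^^ Suc m) ([:0, 1:] * p)) \<beta>"
      by (rule L(2))
    also have "\<dots> = \<beta> * poly ((pderiv ^^ Suc m) p) \<beta> + of_nat (Suc m) * poly ((pderiv ^^ m) p) \<beta>"
      unfolding funpow_pderiv_x_mult by (simp del: of_nat_Suc funpow.simps)
    finally have "L (\<lambda>z. z * polyfun Om p z) =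
        \<beta> * poly ((pderiv ^^ Suc m) p) \<beta> + of_nat (Suc m) * poly ((pderiv ^^ m) p) \<beta>" .
    moreover have "c * of_nat (Suc m) = 1"
      by (simp add: c_def del: of_nat_Suc)
    ultimately show ?thesis
      unfolding L(2) by (simp add: algebra_simps del: of_nat_Suc funpow.simps)
  qed
  moreover have "bounded_functional (\<lambda>f. c * L (\<lambda>z. z * f z) + (- c * \<beta>) * L f)"
    using bounded_functional_lincomb[OF bounded_functional_shift[OF L(1)] L(1)] .
  ultimately show ?thesis
    unfolding reproducible_iff_bounded_functional by blast
qed

lemma reproducible_le:
  assumes "reproducible Om Hs ip \<beta> m" "j \<le> m"
  shows "reproducible Om Hs ip \<beta> j"
  using assms(2,1) by (induction m rule: dec_induct) (auto intro: reproducible_Suc)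

lemma reproducible_of_reproducible_multiset:
  assumes "reproducible_multiset Om Hs ip Z" "\<beta> \<in># Z" "\<beta> \<noteq> 0" "j < count Z \<beta>"
  shows "reproducible Om Hs ip \<beta> j"
proof (rule ccontr)
  assume "\<not> reproducible Om Hs ip \<beta> j"
  then have below: "m < j" if "reproducible Om Hs ip \<beta> m" for m
    using reproducible_le[OF that] by (meson not_le_imp_less)
  obtain m where "reproducible Om Hs ip \<beta> m"
    using assms(1-3) by (auto simp: reproducible_multiset_def)
  then have "j \<ge> 1"
    using below by fastforce
  have "ro Om Hs ip \<beta> \<le> enat (j - 1)"
    unfolding ro_def by (rule Sup_least) (auto dest: below)
  then have "ro Om Hs ip \<beta> + 1 \<le> enat j"
    using \<open>j \<ge> 1\<close> add_right_mono[of _ _ 1] by (fastforce simp: one_enat_def)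
  moreover have "enat (count Z \<beta>) \<le> ro Om Hs ip \<beta> + 1"
    using assms(1-3) by (auto simp: reproducible_multiset_def)
  ultimately show False
    using assms(4) by (meson enat_ord_simps(1) leD order_trans)
qed

lemma gram_det_ne_0:
  assumes mem: "\<And>j. j < n \<Longrightarrow> w j \<in> Hs"
    and indep: "\<And>c. (\<lambda>z. \<Sum>j<n. c j * w j z) = (\<lambda>z. 0) \<Longrightarrow> \<forall>j<n. c j = 0"
  shows "det (mat n n (\<lambda>(r, j). ip (w r) (w j))) \<noteq> 0"
proof
  assume "det (mat n n (\<lambda>(r, j). ip (w r) (w j))) = 0"
  then obtain v where v: "v \<in> carrier_vec n" "v \<noteq> 0\<^sub>v n" "mat n n (\<lambda>(r, j). ip (w r) (w j)) *\<^sub>v v = 0\<^sub>v n"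
    using det_0_iff_vec_prod_zero[of "mat n n (\<lambda>(r, j). ip (w r) (w j))" n] by auto
  define V where "V = (\<lambda>z. \<Sum>j<n. cnj (v $ j) * w j z)"
  have V: "V \<in> Hs"
    unfolding V_def by (rule sum_mem) (auto intro: mem)
  have "ip (w r) V = 0" if "r < n" for r
  proof -
    have "ip (w r) V = (\<Sum>j<n. ip (w r) (w j) * v $ j)"
      unfolding V_def using that mem by (subst ip_sum_right) (auto simp: mult.commute)
    also have "\<dots> = (mat n n (\<lambda>(r, j). ip (w r) (w j)) *\<^sub>v v) $ r"
      using that v(1) by (simp add: scalar_prod_def atLeast0LessThan)
    finally show ?thesis
      using v(3) that by simp
  qed
  moreover have "ip V V = (\<Sum>j<n. cnj (v $ j) * ip (w j) V)"
    using ip_sum_left[of "{..<n}" w V "\<lambda>j. cnj (v $ j)"] mem V by (simp add: V_def[symmetric])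
  ultimately have "V = (\<lambda>z. 0)"
    using ip_self_eq_0[OF V] by simp
  then have "\<forall>j<n. cnj (v $ j) = 0"
    using indep[of "\<lambda>j. cnj (v $ j)"] by (simp add: V_def)
  then have "v = 0\<^sub>v n"
    using v(1) by (intro eq_vecI) auto
  with v(2) show False by simp
qed

lemma kernels_linearly_independent:
  fixes ps :: "(complex \<times> nat) list"
  assumes "distinct ps"
    and ker: "\<And>j. j < length ps \<Longrightarrow> is_kernel (w j) (fst (ps ! j)) (snd (ps ! j))"
    and zero: "(\<lambda>z. \<Sum>j<length ps. c j * w j z) = (\<lambda>z. 0)"
    and "j < length ps"
  shows "c j = 0"
proof -
  have "(\<Sum>j<length ps. cnj (c j) * poly ((pderiv ^^ snd (ps ! j)) p) (fst (ps ! j))) = 0" for p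
  proof -
    have "0 = ip (polyfun Om p) (\<lambda>z. \<Sum>j<length ps. c j * w j z)"
      unfolding zero by (rule ip_zero_right[OF polyfun_mem, symmetric])
    also have "\<dots> = (\<Sum>j<length ps. cnj (c j) * ip (polyfun Om p) (w j))"
      by (rule ip_sum_right) (use ker in \<open>auto simp: is_kernel_def polyfun_mem\<close>)
    also have "\<dots> = (\<Sum>j<length ps. cnj (c j) * poly ((pderiv ^^ snd (ps ! j)) p) (fst (ps ! j)))"
      using ker by (intro sum.cong) (auto simp: is_kernel_def)
    finally show ?thesis ..
  qed
  then have "cnj (c j) = 0"
    by (rule hermite_functionals_independent[OF assms(1) _ assms(4)])
  then show ?thesis by simp
qed

lemma formal_det_mem:
  assumes "u \<in> Hs" "set vs \<subseteq> Hs"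
  shows "formal_det ip u vs \<in> Hs"
  unfolding formal_det_def Let_def
  by (rule sum_mem) (use assms in \<open>auto simp: nth_Cons' nth_mem\<close>)

text \<open>Laplace expansion along the first column.\<close>
lemma ip_formal_det:
  assumes u: "u \<in> Hs" and vs: "set vs \<subseteq> Hs" and K: "K \<in> Hs"
  shows "ip (formal_det ip u vs) K =
    det (mat (Suc (length vs)) (Suc (length vs)) (\<lambda>(r, j). ip ((u # vs) ! r) ((K # vs) ! j)))"
proof -
  define N where "N = length vs"
  define ws where "ws = u # vs"
  define A where "A = mat (Suc N) (Suc N) (\<lambda>(r, j). ip (ws ! r) ((K # vs) ! j))"
  define minor where "minor i = ldet N (\<lambda>r j. ip (ws ! (if r < i then r else Suc r)) (vs ! j))" for i
  have ws: "ws ! i \<in> Hs" if "i \<le> N" for i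
    using that u vs by (auto simp: ws_def N_def nth_Cons' nth_mem)
  have "ip (formal_det ip u vs) K = (\<Sum>i\<le>N. (-1) ^ i * minor i * ip (ws ! i) K)"
    unfolding formal_det_def Let_def ws_def[symmetric] N_def[symmetric] minor_def
    by (rule ip_sum_left) (use ws K in auto)
  also have "\<dots> = (\<Sum>i<Suc N. A $$ (i, 0) * cofactor A i 0)"
    unfolding lessThan_Suc_atMost
  proof (rule sum.cong[OF refl])
    fix i
    assume i: "i \<in> {..N}"
    have "mat_delete A i 0 = mat N N (\<lambda>(r, j). ip (ws ! (if r < i then r else Suc r)) (vs ! j))"
      using i by (intro eq_matI) (auto simp: mat_delete_def A_def)
    then show "(-1) ^ i * minor i * ip (ws ! i) K = A $$ (i, 0) * cofactor A i 0"
      using i by (simp add: cofactor_def minor_def ldet_eq_det A_def)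
  qed
  also have "\<dots> = det A"
    by (rule laplace_expansion_column[symmetric]) (auto simp: A_def)
  finally show ?thesis
    by (simp add: A_def ws_def N_def)
qed

definition shapiro_shields_kernels :: "complex multiset \<Rightarrow> (complex \<Rightarrow> complex) list" where
  "shapiro_shields_kernels Z = map (\<lambda>s. kern Om Hs ip (fst s) (snd s)) (shapiro_shields_nodes Z)"

lemma shapiro_shields_eq_formal_det:
  "shapiro_shields Om Hs ip Z =
    formal_det ip (kern Om Hs ip 0 (count Z 0)) (tl (shapiro_shields_kernels Z))"
  by (simp add: shapiro_shields_def shapiro_shields_kernels_def shapiro_shields_nodes_def Let_def
      map_concat rev_map comp_def)

lemma length_shapiro_shields_kernels:
  "length (shapiro_shields_kernels Z) = length (shapiro_shields_nodes Z)"
  by (simp add: shapiro_shields_kernels_def)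

lemma shapiro_shields_kernels_nth_0:
  "l \<le> count Z 0 \<Longrightarrow> shapiro_shields_kernels Z ! (count Z 0 - l) = kern Om Hs ip 0 l"
  using shapiro_shields_nodes_nth_0 by (simp add: shapiro_shields_kernels_def)

lemma shapiro_shields_kernels_Cons:
  "shapiro_shields_kernels Z = kern Om Hs ip 0 (count Z 0) # tl (shapiro_shields_kernels Z)"
  using shapiro_shields_kernels_nth_0[of "count Z 0" Z] shapiro_shields_nodes_nth_0(1)[of "count Z 0" Z]
  by (cases "shapiro_shields_kernels Z") (simp_all add: length_shapiro_shields_kernels[symmetric])

lemma is_kernel_shapiro_shields_kernels:
  assumes Z: "reproducible_multiset Om Hs ip Z" and j: "j < length (shapiro_shields_nodes Z)"
  shows "is_kernel (shapiro_shields_kernels Z ! j)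
    (fst (shapiro_shields_nodes Z ! j)) (snd (shapiro_shields_nodes Z ! j))"
proof -
  obtain b a where ba: "shapiro_shields_nodes Z ! j = (b, a)"
    by fastforce
  then have "(b = 0 \<and> a \<le> count Z 0) \<or> (b \<in># Z \<and> b \<noteq> 0 \<and> a < count Z b)"
    using j nth_mem set_shapiro_shields_nodes by metis
  then have "is_kernel (kern Om Hs ip b a) b a"
    using kern_0(1) is_kernel_kern reproducible_of_reproducible_multiset[OF Z] by blast
  then show ?thesis
    using ba j by (simp add: shapiro_shields_kernels_def)
qed

lemma shapiro_shields_kernels_mem:
  "reproducible_multiset Om Hs ip Z \<Longrightarrow> set (shapiro_shields_kernels Z) \<subseteq> Hs"
  using is_kernel_shapiro_shields_kernels
  by (auto simp: in_set_conv_nth is_kernel_def length_shapiro_shields_kernels)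

lemma higher_deriv_shapiro_shields_0:
  assumes Z: "reproducible_multiset Om Hs ip Z"
  defines "ws \<equiv> shapiro_shields_kernels Z"
  shows "(deriv ^^ l) (shapiro_shields Om Hs ip Z) 0 =
    det (mat (length ws) (length ws) (\<lambda>(r, j). ip (ws ! r) ((kern Om Hs ip 0 l # tl ws) ! j)))"
proof -
  have u: "kern Om Hs ip 0 (count Z 0) \<in> Hs"
    using kern_0(1) by (simp add: is_kernel_def)
  have ws_Cons: "kern Om Hs ip 0 (count Z 0) # tl ws = ws"
    using shapiro_shields_kernels_Cons[of Z] by (simp add: ws_def)
  have len: "Suc (length (tl ws)) = length ws"
    using ws_Cons by (metis length_Cons)
  have vs: "set (tl ws) \<subseteq> Hs"
    using shapiro_shields_kernels_mem[OF Z] ws_Cons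
    unfolding ws_def by (metis set_subset_Cons subset_trans)
  have "(deriv ^^ l) (shapiro_shields Om Hs ip Z) 0 =
      ip (formal_det ip (kern Om Hs ip 0 (count Z 0)) (tl ws)) (kern Om Hs ip 0 l)"
    unfolding shapiro_shields_eq_formal_det ws_def by (rule kern_0(2)[OF formal_det_mem[OF u vs[unfolded ws_def]]])
  also have "\<dots> = det (mat (length ws) (length ws)
      (\<lambda>(r, j). ip (ws ! r) ((kern Om Hs ip 0 l # tl ws) ! j)))"
    using ip_formal_det[OF u vs, of "kern Om Hs ip 0 l"] kern_0(1)
    unfolding ws_Cons len by (simp add: is_kernel_def)
  finally show ?thesis .
qed

theorem shapiro_shields_order_at_0:
  assumes Z: "reproducible_multiset Om Hs ip Z"
  shows "(\<forall>l < count Z 0. (deriv ^^ l) (shapiro_shields Om Hs ip Z) 0 = 0) \<and>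
         (deriv ^^ count Z 0) (shapiro_shields Om Hs ip Z) 0 \<noteq> 0"
proof (intro conjI allI impI)
  define ws where "ws = shapiro_shields_kernels Z"
  have len: "length ws = length (shapiro_shields_nodes Z)"
    by (simp add: ws_def length_shapiro_shields_kernels)
  fix l
  assume l: "l < count Z 0"
  have "(kern Om Hs ip 0 l # tl ws) ! (count Z 0 - l) = ws ! (count Z 0 - l)"
    using l shapiro_shields_kernels_Cons[of Z] by (metis nth_Cons_pos ws_def zero_less_diff)
  also have "\<dots> = kern Om Hs ip 0 l"
    using l shapiro_shields_kernels_nth_0[of l Z] by (simp add: ws_def)
  finally have "det (mat (length ws) (length ws) (\<lambda>(r, j). ip (ws ! r) ((kern Om Hs ip 0 l # tl ws) ! j))) = 0"
    using l shapiro_shields_nodes_nth_0(1)[of l Z] len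
    by (intro det_mat_eq_0_if_columns_eq[of 0 _ "count Z 0 - l"]) auto
  then show "(deriv ^^ l) (shapiro_shields Om Hs ip Z) 0 = 0"
    using higher_deriv_shapiro_shields_0[OF Z] by (simp add: ws_def)
next
  define ws where "ws = shapiro_shields_kernels Z"
  have "det (mat (length ws) (length ws) (\<lambda>(r, j). ip (ws ! r) (ws ! j))) \<noteq> 0"
  proof (rule gram_det_ne_0)
    show "ws ! j \<in> Hs" if "j < length ws" for j
      using shapiro_shields_kernels_mem[OF Z] nth_mem[OF that] by (auto simp: ws_def)
    show "\<forall>j<length ws. c j = 0" if "(\<lambda>z. \<Sum>j<length ws. c j * (ws ! j) z) = (\<lambda>z. 0)" for c
      using kernels_linearly_independent[OF distinct_shapiro_shields_nodes
          is_kernel_shapiro_shields_kernels[OF Z]] that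
      by (simp add: ws_def length_shapiro_shields_kernels)
  qed
  then show "(deriv ^^ count Z 0) (shapiro_shields Om Hs ip Z) 0 \<noteq> 0"
    using higher_deriv_shapiro_shields_0[OF Z] shapiro_shields_kernels_Cons[of Z]
    by (simp add: ws_def)
qed

end

theorem mainTheorem12:
  assumes "analytic_hilbert Om Hs ip"
    and "reproducible_multiset Om Hs ip Z"
  shows "(\<forall>l < count Z 0. (deriv ^^ l) (shapiro_shields Om Hs ip Z) 0 = 0) \<and>
         (deriv ^^ count Z 0) (shapiro_shields Om Hs ip Z) 0 \<noteq> 0"
proof -
  interpret analytic_hilbert_space Om Hs ip
    by (rule analytic_hilbert_space.intro) (rule assms(1))
  show ?thesis
    using assms(2) by (rule shapiro_shields_order_at_0)
qed

end
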